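(* If $\varphi$ does not satisfy the appropriate $\Delta_2$-condition, then there exists $f\in\mathcal M_{\varphi,w}$ such that $Q_{\varphi,w}(f)\le1$ but $Q_{\varphi,w}(rf)=\infty$ for every $r>1$. The analogous result holds for $\mathfrak m_{\varphi,w}$ (with $\mathfrak q_{\varphi,w}$).
   Context: Let $I=[0,\gamma)$, $0<\gamma\le\infty$, Lebesgue measure $m$, $L_0$ the measurable functions on $I$, $f^*$ the decreasing rearrangement of $f$. Orlicz function: convex $\varphi:[0,\infty)\to[0,\infty)$, $\varphi(0)=0$, $\varphi(u)>0$ for $u>0$. $\varphi$ satisfies $\Delta_2^0$ if there are $K>2$, $u_0>0$ with $\varphi(2u)\le K\varphi(u)$ for $0\le u\le u_0$; $\Delta_2^\infty$ if there are $K>2$, $u_0\ge0$ with $\varphi(2u)\le K\varphi(u)$ for $u\ge u_0$; $\Delta_2$ if both. The appropriate $\Delta_2$-condition means $\Delta_2^\infty$ if $\gamma<\infty$, $\Delta_2$ if $\gamma=\infty$, and $\Delta_2^0$ for sequence spaces. Weight: positive decreasing locally integrable $w$ on $I$, $W(t)=\int_0^tw$, $W(\infty)=\infty$ if $\gamma=\infty$. Halperin level function $g^0$ of $g\ge0$ w.r.t. $w$: with $G(a,b)=\int_a^bg$, $W(a,b)=\int_a^bw$, $(a,b]$ is a level interval if $G(a,t)/W(a,t)\le G(a,b)/W(a,b)$ for all $t\in(a,b]$, maximal if not contained in another; $g^0=\frac{G(a,b)}{W(a,b)}w$ on each maximal level interval and $g^0=g$ elsewhere. $Q_{\varphi,w}(f)=\int_I\varphi((f^*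 )^0/w)w$ and $\mathcal M_{\varphi,w}=\{f:Q_{\varphi,w}(kf)<\infty\text{ for some }k>0\}$. Sequence analogues ($\mathbb N$, counting measure, decreasing positive weight sequence with $\sum w(i)=\infty$, $\mathfrak q_{\varphi,w}$ given by sums, $\mathfrak m_{\varphi,w}$) are defined the same way. *)

theory Defs
  imports "HOL-Analysis.Analysis"
begin

definition orlicz_fun :: "(real \<Rightarrow> real) \<Rightarrow> bool" where
  "orlicz_fun \<phi> \<longleftrightarrow> convex_on {0..} \<phi> \<and> \<phi> 0 = 0 \<and> (\<forall>u>0. \<phi> u > 0)"

definition Delta2_zero :: "(real \<Rightarrow> real) \<Rightarrow> bool" where
  "Delta2_zero \<phi> \<longleftrightarrow> (\<exists>K>2. \<exists>u0>0. \<forall>u. 0 \<le> u \<and> u \<le> u0 \<longrightarrow> \<phi> (2*u) \<le> K * \<phi> u)"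

definition Delta2_infty :: "(real \<Rightarrow> real) \<Rightarrow> bool" where
  "Delta2_infty \<phi> \<longleftrightarrow> (\<exists>K>2. \<exists>u0\<ge>0. \<forall>u. u \<ge> u0 \<longrightarrow> \<phi> (2*u) \<le> K * \<phi> u)"

definition Delta2 :: "(real \<Rightarrow> real) \<Rightarrow> bool" where
  "Delta2 \<phi> \<longleftrightarrow> Delta2_zero \<phi> \<and> Delta2_infty \<phi>"

definition appr_Delta2 :: "ereal \<Rightarrow> (real \<Rightarrow> real) \<Rightarrow> bool" where
  "appr_Delta2 \<gamma> \<phi> = (if \<gamma> < \<infinity> then Delta2_infty \<phi> else Delta2 \<phi>)"

definition phi_ext :: "(real \<Rightarrow> real) \<Rightarrow> ennreal \<Rightarrow> ennreal" where
  "phi_ext \<phi> u = (if u = top then top else ennreal (\<phi> (enn2real u)))"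

definition Iset :: "ereal \<Rightarrow> real set" where
  "Iset \<gamma> = {x. 0 \<le> x \<and> ereal x < \<gamma>}"

definition weight_fun :: "ereal \<Rightarrow> (real \<Rightarrow> real) \<Rightarrow> bool" where
  "weight_fun \<gamma> w \<longleftrightarrow>
     (\<forall>x\<in>Iset \<gamma>. 0 < w x) \<and>
     (\<forall>x\<in>Iset \<gamma>. \<forall>y\<in>Iset \<gamma>. x \<le> y \<longrightarrow> w y \<le> w x) \<and>
     (\<forall>t\<in>Iset \<gamma>. set_integrable lebesgue {0..t} w) \<and>
     (\<gamma> = \<infinity> \<longrightarrow> (\<integral>\<^sup>+ x\<in>{0..}. ennreal (w x) \<partial>lebesgue) = top)"

definition distr_fun :: "ereal \<Rightarrow> (real \<Rightarrow> real) \<Rightarrow> ennreal \<Rightarrow> ennreal" where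
  "distr_fun \<gamma> f s = emeasure lebesgue {x \<in> Iset \<gamma>. ennreal \<bar>f x\<bar> > s}"

definition drearr :: "ereal \<Rightarrow> (real \<Rightarrow> real) \<Rightarrow> real \<Rightarrow> ennreal" where
  "drearr \<gamma> f t = Inf {s. distr_fun \<gamma> f s \<le> ennreal t}"

definition Gint :: "(real \<Rightarrow> ennreal) \<Rightarrow> real \<Rightarrow> real \<Rightarrow> ennreal" where
  "Gint g a b = (\<integral>\<^sup>+ x\<in>{a<..b}. g x \<partial>lebesgue)"

definition Wint :: "(real \<Rightarrow> real) \<Rightarrow> real \<Rightarrow> real \<Rightarrow> ennreal" where
  "Wint w a b = (\<integral>\<^sup>+ x\<in>{a<..b}. ennreal (w x) \<partial>lebesgue)"

definition level_int :: "ereal \<Rightarrow> (real \<Rightarrow> real) \<Rightarrow> (real \<Rightarrow> ennreal) \<Rightarrow> real \<Rightarrow> real \<Rightarrow> bool" where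
  "level_int \<gamma> w g a b \<longleftrightarrow> 0 \<le> a \<and> a < b \<and> ereal b \<le> \<gamma> \<and>
     (\<forall>t. a < t \<and> t \<le> b \<longrightarrow> Gint g a t / Wint w a t \<le> Gint g a b / Wint w a b)"

definition max_level_int :: "ereal \<Rightarrow> (real \<Rightarrow> real) \<Rightarrow> (real \<Rightarrow> ennreal) \<Rightarrow> real \<Rightarrow> real \<Rightarrow> bool" where
  "max_level_int \<gamma> w g a b \<longleftrightarrow> level_int \<gamma> w g a b \<and>
     \<not> (\<exists>c d. level_int \<gamma> w g c d \<and> {a<..b} \<subset> {c<..d})"

definition level_fun :: "ereal \<Rightarrow> (real \<Rightarrow> real) \<Rightarrow> (real \<Rightarrow> ennreal) \<Rightarrow> real \<Rightarrow> ennreal" where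
  "level_fun \<gamma> w g x =
     (if \<exists>a b. max_level_int \<gamma> w g a b \<and> a < x \<and> x \<le> b
      then (case (SOME p. max_level_int \<gamma> w g (fst p) (snd p) \<and> fst p < x \<and> x \<le> snd p) of
              (a, b) \<Rightarrow> Gint g a b / Wint w a b * ennreal (w x))
      else g x)"

definition Qfun :: "ereal \<Rightarrow> (real \<Rightarrow> real) \<Rightarrow> (real \<Rightarrow> real) \<Rightarrow> (real \<Rightarrow> real) \<Rightarrow> ennreal" where
  "Qfun \<gamma> \<phi> w f = (\<integral>\<^sup>+ x\<in>Iset \<gamma>.
      phi_ext \<phi> (level_fun \<gamma> w (drearr \<gamma> f) x / ennreal (w x)) * ennreal (w x) \<partial>lebesgue)"

definition Mspace :: "ereal \<Rightarrow> (real \<Rightarrow> real) \<Rightarrow> (real \<Rightarrow> real) \<Rightarrow> (real \<Rightarrow> real) set" where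
  "Mspace \<gamma> \<phi> w = {f. f \<in> borel_measurable (restrict_space lebesgue (Iset \<gamma>)) \<and>
       (\<exists>k>0. Qfun \<gamma> \<phi> w (\<lambda>x. k * f x) < top)}"

section \<open>Sequence spaces (indices 0,1,2,... play the role of 1,2,3,...)\<close>

definition weight_seq :: "(nat \<Rightarrow> real) \<Rightarrow> bool" where
  "weight_seq w \<longleftrightarrow> (\<forall>i. 0 < w i) \<and> decseq w \<and> (\<Sum>i. ennreal (w i)) = top"

definition sdrearr :: "(nat \<Rightarrow> real) \<Rightarrow> nat \<Rightarrow> ennreal" where
  "sdrearr f n = Inf {s. emeasure (count_space UNIV) {i. ennreal \<bar>f i\<bar> > s} \<le> of_nat n}"

definition Gsum :: "(nat \<Rightarrow> ennreal) \<Rightarrow> nat \<Rightarrow> nat \<Rightarrow> ennreal" where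
  "Gsum g a b = (\<Sum>i\<in>{a..<b}. g i)"

definition Wsum :: "(nat \<Rightarrow> real) \<Rightarrow> nat \<Rightarrow> nat \<Rightarrow> ennreal" where
  "Wsum w a b = (\<Sum>i\<in>{a..<b}. ennreal (w i))"

text \<open>The index block {a..<b} corresponds to the integer interval (a,b].\<close>
definition slevel_int :: "(nat \<Rightarrow> real) \<Rightarrow> (nat \<Rightarrow> ennreal) \<Rightarrow> nat \<Rightarrow> nat \<Rightarrow> bool" where
  "slevel_int w g a b \<longleftrightarrow> a < b \<and>
     (\<forall>t. a < t \<and> t \<le> b \<longrightarrow> Gsum g a t / Wsum w a t \<le> Gsum g a b / Wsum w a b)"

definition smax_level_int :: "(nat \<Rightarrow> real) \<Rightarrow> (nat \<Rightarrow> ennreal) \<Rightarrow> nat \<Rightarrow> nat \<Rightarrow> bool" where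
  "smax_level_int w g a b \<longleftrightarrow> slevel_int w g a b \<and>
     \<not> (\<exists>c d. slevel_int w g c d \<and> {a..<b} \<subset> {c..<d})"

definition slevel_fun :: "(nat \<Rightarrow> real) \<Rightarrow> (nat \<Rightarrow> ennreal) \<Rightarrow> nat \<Rightarrow> ennreal" where
  "slevel_fun w g i =
     (if \<exists>a b. smax_level_int w g a b \<and> a \<le> i \<and> i < b
      then (case (SOME p. smax_level_int w g (fst p) (snd p) \<and> fst p \<le> i \<and> i < snd p) of
              (a, b) \<Rightarrow> Gsum g a b / Wsum w a b * ennreal (w i))
      else g i)"

definition qseq :: "(real \<Rightarrow> real) \<Rightarrow> (nat \<Rightarrow> real) \<Rightarrow> (nat \<Rightarrow> real) \<Rightarrow> ennreal" where
  "qseq \<phi> w f = (\<Sum>i. phi_ext \<phi> (slevel_fun w (sdrearr f) i / ennreal (w i)) * ennreal (w i))"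

definition mseq :: "(real \<Rightarrow> real) \<Rightarrow> (nat \<Rightarrow> real) \<Rightarrow> (nat \<Rightarrow> real) set" where
  "mseq \<phi> w = {f. \<exists>k>0. qseq \<phi> w (\<lambda>i. k * f i) < top}"

end

theory Submission
  imports Defs
begin

text \<open>If the appropriate \<open>\<Delta>\<^sub>2\<close>-condition fails, then for every \<open>n\<close> there is a value \<open>v\<^sub>n\<close>
  (near \<open>0\<close> if \<open>\<Delta>\<^sub>2\<^sup>0\<close> fails, near \<open>\<infinity>\<close> if \<open>\<Delta>\<^sub>2\<^sup>\<infinity>\<close> fails) where \<open>\<phi>\<close> jumps:
  \<open>\<phi>(\<rho>\<^sub>n v\<^sub>n) > 2\<^sup>n\<^sup>+\<^sup>2 \<phi>(v\<^sub>n)\<close> with \<open>\<rho>\<^sub>n = 1 + 1/(n+1)\<close>. Put \<open>f = h w\<close>, where \<open>h\<close> is the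
  decreasing step function equal to \<open>v\<^sub>n\<close> on consecutive blocks whose \<open>w\<close>-mass \<open>a\<^sub>n\<close> lies
  between \<open>1/\<phi>(\<rho>\<^sub>n v\<^sub>n)\<close> and \<open>2\<^sup>-\<^sup>n\<^sup>-\<^sup>1/\<phi>(v\<^sub>n)\<close>. As \<open>f/w\<close> is decreasing, \<open>f\<close> is its own
  decreasing rearrangement and level function, so \<open>Q(r f) = \<Sum> \<phi>(r v\<^sub>n) a\<^sub>n\<close>. This is at most
  \<open>\<Sum> 2\<^sup>-\<^sup>n\<^sup>-\<^sup>1 = 1\<close> for \<open>r = 1\<close>, while for \<open>r > 1\<close> eventually \<open>\<rho>\<^sub>n \<le> r\<close> and every block
  contributes at least \<open>1\<close>. For sequences the blocks are sets of consecutive indices; for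
  functions they are intervals running off to \<open>\<infinity>\<close> (only needed when \<open>\<gamma> = \<infinity>\<close> and
  \<open>\<Delta>\<^sub>2\<^sup>0\<close> fails) or shrinking to \<open>0\<close> (when \<open>\<Delta>\<^sub>2\<^sup>\<infinity>\<close> fails).\<close>

section \<open>Orlicz functions\<close>

lemma orlicz_fun_pos: "orlicz_fun \<phi> \<Longrightarrow> 0 < u \<Longrightarrow> 0 < \<phi> u"
  by (simp add: orlicz_fun_def)

lemma orlicz_fun_nonneg: "orlicz_fun \<phi> \<Longrightarrow> 0 \<le> u \<Longrightarrow> 0 \<le> \<phi> u"
  by (cases "u = 0") (auto simp: orlicz_fun_def intro: less_imp_le)

lemma orlicz_fun_scale:
  assumes "orlicz_fun \<phi>" "0 \<le> u" "0 \<le> l" "l \<le> 1"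
  shows "\<phi> (l * u) \<le> l * \<phi> u"
  using convex_onD[of "{0..}" \<phi> l 0 u] assms by (simp add: orlicz_fun_def)

lemma orlicz_fun_mono:
  assumes "orlicz_fun \<phi>" "0 \<le> x" "x \<le> y"
  shows "\<phi> x \<le> \<phi> y"
proof (cases "x = y")
  case False
  then have y: "0 < y" using assms by auto
  have "\<phi> (x / y * y) \<le> x / y * \<phi> y"
    using orlicz_fun_scale[OF assms(1), of y "x / y"] assms y by simp
  also have "\<dots> \<le> \<phi> y"
    using orlicz_fun_nonneg[OF assms(1), of y] assms y by (simp add: divide_le_eq mult_right_mono mult.commute)
  finally show ?thesis using y by simp
qed simp

lemma orlicz_fun_ge_linear:
  assumes "orlicz_fun \<phi>" "1 \<le> u"
  shows "u * \<phi> 1 \<le> \<phi> u"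
  using orlicz_fun_scale[OF assms(1), of u "1 / u"] assms by (simp add: field_simps)

lemma orlicz_fun_le_linear:
  assumes "orlicz_fun \<phi>" "0 \<le> u"
  shows "u \<le> 1 + \<phi> u / \<phi> 1"
proof (cases "u \<le> 1")
  case True
  moreover have "0 \<le> \<phi> u / \<phi> 1" using orlicz_fun_nonneg[OF assms] orlicz_fun_pos[OF assms(1), of 1] by simp
  ultimately show ?thesis by linarith
next
  case False
  then have "u \<le> \<phi> u / \<phi> 1"
    using orlicz_fun_ge_linear[OF assms(1), of u] orlicz_fun_pos[OF assms(1), of 1]
    by (simp add: le_divide_eq)
  then show ?thesis by linarith
qed

lemma orlicz_fun_small:
  assumes "orlicz_fun \<phi>" "0 < B"
  obtains \<delta> where "0 < \<delta>" "\<And>x. 0 \<le> x \<Longrightarrow> x \<le> \<delta> \<Longrightarrow> \<phi> x \<le> B"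
proof
  have p1: "0 < \<phi> 1" using orlicz_fun_pos[OF assms(1)] by simp
  show "0 < min 1 (B / \<phi> 1)" using assms p1 by simp
  fix x assume x: "0 \<le> x" "x \<le> min 1 (B / \<phi> 1)"
  have "\<phi> (x * 1) \<le> x * \<phi> 1" using orlicz_fun_scale[OF assms(1), of 1 x] x by simp
  also have "\<dots> \<le> B" using x p1 by (simp add: le_divide_eq)
  finally show "\<phi> x \<le> B" by simp
qed

section \<open>Failure of the \<open>\<Delta>\<^sub>2\<close>-conditions\<close>

lemma iterated_dilation_bound:
  fixes \<phi> :: "real \<Rightarrow> real"
  assumes "0 < K" "\<And>u. u \<in> S \<Longrightarrow> \<phi> (\<rho> * u) \<le> K * \<phi> u" "\<And>j. j < m \<Longrightarrow> \<rho> ^ j * u \<in> S"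
  shows "\<phi> (\<rho> ^ m * u) \<le> K ^ m * \<phi> u"
  using assms(3)
proof (induction m)
  case (Suc m)
  have "\<phi> (\<rho> ^ Suc m * u) \<le> K * \<phi> (\<rho> ^ m * u)"
    using assms(2)[of "\<rho> ^ m * u"] Suc.prems by (simp add: mult.assoc)
  also have "\<dots> \<le> K * (K ^ m * \<phi> u)" using Suc assms(1) by simp
  finally show ?case by simp
qed simp

text \<open>A doubling bound follows from a bound for one dilation factor \<open>\<rho> > 1\<close>, because
  \<open>2 \<le> \<rho>\<^sup>m\<close> for some \<open>m\<close>; this holds near zero and near infinity alike.\<close>

lemma not_Delta2_zero_jump:
  assumes \<phi>: "orlicz_fun \<phi>" and "\<not> Delta2_zero \<phi>" "1 < \<rho>" "0 < \<epsilon>"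
  shows "\<exists>u. 0 < u \<and> u \<le> \<epsilon> \<and> K * \<phi> u < \<phi> (\<rho> * u)"
proof (rule ccontr)
  assume none: "\<not> ?thesis"
  have bound: "\<phi> (\<rho> * u) \<le> max K 1 * \<phi> u" if "u \<in> {0<..\<epsilon>}" for u
  proof -
    have "\<phi> (\<rho> * u) \<le> K * \<phi> u" using none that by (auto simp: not_less)
    also have "\<dots> \<le> max K 1 * \<phi> u"
      using that orlicz_fun_nonneg[OF \<phi>, of u] by (intro mult_right_mono) auto
    finally show ?thesis .
  qed
  obtain m where m: "2 < \<rho> ^ m" using real_arch_pow[OF \<open>1 < \<rho>\<close>] by blast
  have "Delta2_zero \<phi>"
    unfolding Delta2_zero_def
  proof (intro exI conjI allI impI)
    show "2 < max 3 (max K 1 ^ m)" "0 < \<epsilon> / \<rho> ^ m" using assms by auto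
    fix u assume u: "0 \<le> u \<and> u \<le> \<epsilon> / \<rho> ^ m"
    show "\<phi> (2 * u) \<le> max 3 (max K 1 ^ m) * \<phi> u"
    proof (cases "u = 0")
      case False
      have "\<phi> (2 * u) \<le> \<phi> (\<rho> ^ m * u)"
        using m u by (intro orlicz_fun_mono[OF \<phi>] mult_right_mono) auto
      also have "\<dots> \<le> max K 1 ^ m * \<phi> u"
      proof (rule iterated_dilation_bound[of "max K 1" "{0<..\<epsilon>}" \<phi> \<rho>, OF _ bound])
        fix j assume "j < m"
        then have "\<rho> ^ j * u \<le> \<rho> ^ m * (\<epsilon> / \<rho> ^ m)"
          using u assms by (intro mult_mono power_increasing) auto
        then show "\<rho> ^ j * u \<in> {0<..\<epsilon>}" using u False assms by auto
      qed simp
      also have "\<dots> \<le> max 3 (max K 1 ^ m) * \<phi> u"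
        using orlicz_fun_nonneg[OF \<phi>, of u] u by (intro mult_right_mono) auto
      finally show ?thesis .
    qed (simp add: \<phi>[unfolded orlicz_fun_def])
  qed
  then show False using assms(2) by simp
qed

lemma not_Delta2_infty_jump:
  assumes \<phi>: "orlicz_fun \<phi>" and "\<not> Delta2_infty \<phi>" "1 < \<rho>"
  shows "\<exists>u. M \<le> u \<and> 0 < u \<and> K * \<phi> u < \<phi> (\<rho> * u)"
proof (rule ccontr)
  assume none: "\<not> ?thesis"
  have bound: "\<phi> (\<rho> * u) \<le> max K 1 * \<phi> u" if "u \<in> {max M 1..}" for u
  proof -
    have "\<phi> (\<rho> * u) \<le> K * \<phi> u" using none that by (auto simp: not_less)
    also have "\<dots> \<le> max K 1 * \<phi> u"
      using that orlicz_fun_nonneg[OF \<phi>, of u] by (intro mult_right_mono) auto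
    finally show ?thesis .
  qed
  obtain m where m: "2 < \<rho> ^ m" using real_arch_pow[OF \<open>1 < \<rho>\<close>] by blast
  have "Delta2_infty \<phi>"
    unfolding Delta2_infty_def
  proof (intro exI conjI allI impI)
    show "2 < max 3 (max K 1 ^ m)" "0 \<le> max M 1" by auto
    fix u assume u: "max M 1 \<le> u"
    have "\<phi> (2 * u) \<le> \<phi> (\<rho> ^ m * u)"
      using m u by (intro orlicz_fun_mono[OF \<phi>] mult_right_mono) auto
    also have "\<dots> \<le> max K 1 ^ m * \<phi> u"
    proof (rule iterated_dilation_bound[of "max K 1" "{max M 1..}" \<phi> \<rho>, OF _ bound])
      fix j
      have "u \<le> \<rho> ^ j * u" using mult_right_mono[of 1 "\<rho> ^ j" u] assms u by simp
      then show "\<rho> ^ j * u \<in> {max M 1..}" using u by (metis atLeast_iff order.trans)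
    qed simp
    also have "\<dots> \<le> max 3 (max K 1 ^ m) * \<phi> u"
      using orlicz_fun_nonneg[OF \<phi>, of u] u by (intro mult_right_mono) auto
    finally show "\<phi> (2 * u) \<le> max 3 (max K 1 ^ m) * \<phi> u" .
  qed
  then show False using assms(2) by simp
qed

lemma not_Delta2_zero_jump_seq:
  assumes \<phi>: "orlicz_fun \<phi>" and nD: "\<not> Delta2_zero \<phi>" and \<rho>: "\<And>n. 1 < \<rho> n" and "0 < B"
  obtains v where "decseq v" "\<And>n. 0 < v n" "\<And>n. K n * \<phi> (v n) < \<phi> (\<rho> n * v n)"
    "\<And>n. \<phi> (\<rho> n * v n) \<le> B"
proof -
  obtain \<delta> where \<delta>: "0 < \<delta>" "\<And>x. 0 \<le> x \<Longrightarrow> x \<le> \<delta> \<Longrightarrow> \<phi> x \<le> B"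
    using orlicz_fun_small[OF \<phi> \<open>0 < B\<close>] by blast
  let ?P = "\<lambda>n u. 0 < u \<and> K n * \<phi> u < \<phi> (\<rho> n * u) \<and> \<phi> (\<rho> n * u) \<le> B"
  have step: "\<exists>u. ?P n u \<and> u \<le> e" if "0 < e" for n e
  proof -
    obtain u where u: "0 < u" "u \<le> min e (\<delta> / \<rho> n)" "K n * \<phi> u < \<phi> (\<rho> n * u)"
      using not_Delta2_zero_jump[OF \<phi> nD \<rho>, of "min e (\<delta> / \<rho> n)"] \<open>0 < e\<close> \<delta>(1) \<rho>[of n]
      by auto
    have "\<rho> n * u \<le> \<delta>" using u \<rho>[of n] by (simp add: field_simps)
    then show ?thesis using u \<delta>(2)[of "\<rho> n * u"] \<rho>[of n] by (intro exI[of _ u]) auto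
  qed
  have "\<exists>v. \<forall>n. ?P n (v n) \<and> v (Suc n) \<le> v n"
  proof (rule dependent_nat_choice)
    show "\<exists>u. ?P 0 u" using step[of 1 0] by auto
    show "\<exists>y. ?P (Suc n) y \<and> y \<le> u" if "?P n u" for u n using step[of u "Suc n"] that by auto
  qed
  then show ?thesis using that by (auto intro: decseq_SucI)
qed

lemma not_Delta2_infty_jump_seq:
  assumes \<phi>: "orlicz_fun \<phi>" and nD: "\<not> Delta2_infty \<phi>" and \<rho>: "\<And>n. 1 < \<rho> n"
  obtains v where "incseq v" "\<And>n. 0 < v n" "\<And>n. K n * \<phi> (v n) < \<phi> (\<rho> n * v n)"
    "\<And>n. B \<le> \<phi> (v n)"
proof -
  have p1: "0 < \<phi> 1" using orlicz_fun_pos[OF \<phi>] by simp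
  let ?P = "\<lambda>n u. 0 < u \<and> K n * \<phi> u < \<phi> (\<rho> n * u) \<and> B \<le> \<phi> u"
  have step: "\<exists>u. ?P n u \<and> M \<le> u" for n M
  proof -
    obtain u where u: "max M (max 1 (B / \<phi> 1)) \<le> u" "0 < u" "K n * \<phi> u < \<phi> (\<rho> n * u)"
      using not_Delta2_infty_jump[OF \<phi> nD \<rho>] by blast
    have "B \<le> u * \<phi> 1" using u p1 by (simp add: divide_le_eq)
    then show ?thesis using u orlicz_fun_ge_linear[OF \<phi>, of u] by (intro exI[of _ u]) auto
  qed
  have "\<exists>v. \<forall>n. ?P n (v n) \<and> v n \<le> v (Suc n)"
  proof (rule dependent_nat_choice)
    show "\<exists>u. ?P 0 u" using step[of 0] by auto
    show "\<exists>y. ?P (Suc n) y \<and> u \<le> y" if "?P n u" for u n using step[of "Suc n" u] by auto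
  qed
  then show ?thesis using that by (auto intro: incseq_SucI)
qed

section \<open>Series over blocks\<close>

lemma suminf_ennreal_le_1:
  fixes f :: "nat \<Rightarrow> ennreal"
  assumes "\<And>n. f n \<le> ennreal ((1/2) ^ Suc n)"
  shows "suminf f \<le> 1"
proof (rule suminf_le_const)
  fix m
  have "(\<Sum>n<m. f n) \<le> (\<Sum>n<m. ennreal ((1/2) ^ Suc n))"
    using assms by (intro sum_mono)
  also have "\<dots> = ennreal (\<Sum>n<m. (1/2) ^ Suc n)" by simp
  also have "(\<Sum>n<m. (1/2::real) ^ Suc n) = 1 - (1/2) ^ m"
    by (induction m) (auto simp: field_simps)
  finally show "(\<Sum>n<m. f n) \<le> 1"
    by (rule order_trans) (simp add: ennreal_le_1)
qed simp

lemma suminf_ennreal_eq_top: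
  fixes f :: "nat \<Rightarrow> ennreal"
  assumes "\<And>n. N \<le> n \<Longrightarrow> 1 \<le> f n"
  shows "suminf f = top"
proof (rule ccontr)
  assume "suminf f \<noteq> top"
  then obtain k where k: "suminf f < of_nat k"
    using ennreal_Ex_less_of_nat less_top by blast
  have "of_nat k = (\<Sum>n\<in>{N..<N + k}. (1::ennreal))" by simp
  also have "\<dots> \<le> (\<Sum>n\<in>{N..<N + k}. f n)" using assms by (intro sum_mono) auto
  also have "\<dots> \<le> suminf f" by (intro sum_le_suminf) auto
  finally show False using k by simp
qed

lemma summable_le_geometric_half:
  fixes a :: "nat \<Rightarrow> real"
  assumes "\<And>n. 0 \<le> a n" "\<And>n. a n \<le> C * (1/2) ^ n"
  shows "summable a" "suminf a \<le> 2 * C"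
proof -
  have geom: "(\<lambda>n. C * (1/2) ^ n) sums (C * 2)"
    using geometric_sums[of "1/2::real"] by (intro sums_mult) simp
  show "summable a"
    using assms by (intro summable_comparison_test'[OF sums_summable[OF geom]]) simp
  then show "suminf a \<le> 2 * C"
    using suminf_le[OF assms(2) _ sums_summable[OF geom]] sums_unique[OF geom] by simp
qed

lemma orlicz_step_series:
  fixes v a \<rho> :: "nat \<Rightarrow> real"
  assumes \<phi>: "orlicz_fun \<phi>" and "\<rho> \<longlonglongrightarrow> 1" and v: "\<And>n. 0 \<le> v n" and a: "\<And>n. 0 \<le> a n"
    and small: "\<And>n. \<phi> (v n) * a n \<le> (1/2) ^ Suc n"
    and big: "\<And>n. 1 \<le> \<phi> (\<rho> n * v n) * a n"
  shows "(\<Sum>n. ennreal (\<phi> (v n) * a n)) \<le> 1"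
    and "1 < r \<Longrightarrow> (\<Sum>n. ennreal (\<phi> (r * v n) * a n)) = top"
proof -
  show "(\<Sum>n. ennreal (\<phi> (v n) * a n)) \<le> 1"
    using small by (intro suminf_ennreal_le_1 ennreal_leI)
  assume "1 < r"
  have "\<forall>\<^sub>F n in sequentially. 0 < \<rho> n \<and> \<rho> n < r"
    using assms(2) \<open>1 < r\<close> by (intro eventually_conj order_tendstoD) auto
  then obtain N where N: "\<And>n. N \<le> n \<Longrightarrow> 0 < \<rho> n \<and> \<rho> n < r"
    by (auto simp: eventually_sequentially)
  show "(\<Sum>n. ennreal (\<phi> (r * v n) * a n)) = top"
  proof (rule suminf_ennreal_eq_top[of N])
    fix n assume "N \<le> n"
    then have "\<phi> (\<rho> n * v n) \<le> \<phi> (r * v n)"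
      using N[of n] v[of n] by (intro orlicz_fun_mono[OF \<phi>] mult_right_mono) auto
    then have "1 \<le> \<phi> (r * v n) * a n"
      using big[of n] mult_right_mono[OF _ a[of n]] by (meson order_trans)
    then show "1 \<le> ennreal (\<phi> (r * v n) * a n)" using ennreal_leI by fastforce
  qed
qed

lemma orlicz_jump_series:
  fixes v \<rho> :: "nat \<Rightarrow> real"
  assumes \<phi>: "orlicz_fun \<phi>" and "\<rho> \<longlonglongrightarrow> 1" and v: "\<And>n. 0 < v n"
    and jump: "\<And>n. 2 ^ (n + 2) * \<phi> (v n) < \<phi> (\<rho> n * v n)"
    and a: "\<And>n. a n = (1/2) ^ (n + 2) / \<phi> (v n)"
  shows "(\<Sum>n. ennreal (\<phi> (v n) * a n)) \<le> 1"
    and "1 < r \<Longrightarrow> (\<Sum>n. ennreal (\<phi> (r * v n) * a n)) = top"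
proof -
  have pos: "0 < \<phi> (v n)" for n using orlicz_fun_pos[OF \<phi> v] .
  have small: "\<phi> (v n) * a n \<le> (1/2) ^ Suc n" for n
    using pos[of n] by (simp add: a power_add)
  have big: "1 \<le> \<phi> (\<rho> n * v n) * a n" for n
  proof -
    have "1 = 2 ^ (n + 2) * \<phi> (v n) * a n" using pos[of n] by (simp add: a power_divide)
    also have "\<dots> \<le> \<phi> (\<rho> n * v n) * a n"
      using jump[of n] pos[of n] by (intro mult_right_mono) (auto simp: a)
    finally show ?thesis .
  qed
  have "0 \<le> a n" for n using pos[of n] by (simp add: a)
  then show "(\<Sum>n. ennreal (\<phi> (v n) * a n)) \<le> 1"
    and "1 < r \<Longrightarrow> (\<Sum>n. ennreal (\<phi> (r * v n) * a n)) = top"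
    using orlicz_step_series[OF \<phi> assms(2) _ _ small big] v by (simp_all add: order_less_imp_le)
qed

lemma strict_mono_Ico_index:
  fixes s :: "nat \<Rightarrow> 'a::linorder"
  assumes "strict_mono s" "s 0 \<le> x" "x < s m"
  shows "\<exists>!n. s n \<le> x \<and> x < s (Suc n)"
proof (rule ex_ex1I)
  define k where "k = (LEAST k. x < s k)"
  have "x < s k" unfolding k_def using assms(3) by (rule LeastI)
  moreover have "k \<noteq> 0" using \<open>x < s k\<close> assms(2) by (cases k) auto
  then obtain n where n: "k = Suc n" using not0_implies_Suc by blast
  moreover have "s n \<le> x" using not_less_Least[of n "\<lambda>k. x < s k"] n by (auto simp: k_def)
  ultimately show "\<exists>n. s n \<le> x \<and> x < s (Suc n)" by blast
next
  fix n n' assume "s n \<le> x \<and> x < s (Suc n)" "s n' \<le> x \<and> x < s (Suc n')"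
  then have "s n < s (Suc n')" "s n' < s (Suc n)" by auto
  then show "n = n'" using strict_mono_less[OF assms(1)] by simp
qed

lemma strict_mono_Ioc_index:
  fixes s :: "nat \<Rightarrow> 'a::linorder"
  assumes "strict_mono s" "s 0 < x" "x \<le> s m"
  shows "\<exists>!n. s n < x \<and> x \<le> s (Suc n)"
proof (rule ex_ex1I)
  define k where "k = (LEAST k. x \<le> s k)"
  have "x \<le> s k" unfolding k_def using assms(3) by (rule LeastI)
  moreover have "k \<noteq> 0" using \<open>x \<le> s k\<close> assms(2) by (cases k) auto
  then obtain n where n: "k = Suc n" using not0_implies_Suc by blast
  moreover have "s n < x" using not_less_Least[of n "\<lambda>k. x \<le> s k"] n by (auto simp: k_def)
  ultimately show "\<exists>n. s n < x \<and> x \<le> s (Suc n)" by blast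
next
  fix n n' assume "s n < x \<and> x \<le> s (Suc n)" "s n' < x \<and> x \<le> s (Suc n')"
  then have "s n < s (Suc n')" "s n' < s (Suc n)" by auto
  then show "n = n'" using strict_mono_less[OF assms(1)] by simp
qed

lemma suminf_ennreal_blocks:
  fixes f :: "nat \<Rightarrow> ennreal"
  assumes "strict_mono c" "c 0 = 0"
  shows "(\<Sum>i. f i) = (\<Sum>n. \<Sum>i\<in>{c n..<c (Suc n)}. f i)"
proof -
  have partial: "(\<Sum>n<N. \<Sum>i\<in>{c n..<c (Suc n)}. f i) = (\<Sum>i<c N. f i)" for N
  proof (induction N)
    case (Suc N)
    have "c N \<le> c (Suc N)" using assms(1) by (simp add: strict_mono_less_eq)
    then show ?case
      using Suc by (simp add: lessThan_atLeast0 sum.atLeastLessThan_concat)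
  qed (simp add: assms(2))
  have "(\<lambda>N. \<Sum>i<c N. f i) \<longlonglongrightarrow> (\<Sum>i. f i)"
    using LIMSEQ_subseq_LIMSEQ[OF summable_LIMSEQ[of f] assms(1)] by (simp add: o_def)
  moreover have "(\<lambda>N. \<Sum>i<c N. f i) \<longlonglongrightarrow> (\<Sum>n. \<Sum>i\<in>{c n..<c (Suc n)}. f i)"
    unfolding partial[symmetric] by (rule summable_LIMSEQ) simp
  ultimately show ?thesis by (rule LIMSEQ_unique)
qed

section \<open>Sequence spaces\<close>

lemma sdrearr_decseq:
  assumes nonneg: "\<And>i. 0 \<le> f i" and dec: "decseq f"
  shows "sdrearr f n = ennreal (f n)"
  unfolding sdrearr_def
proof (rule antisym)
  have "i < n" if "ennreal (f n) < ennreal \<bar>f i\<bar>" for i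
  proof (rule ccontr)
    assume "\<not> i < n"
    then have "ennreal \<bar>f i\<bar> \<le> ennreal (f n)"
      using dec nonneg[of i] by (simp add: decseq_def ennreal_leI)
    then show False using that by simp
  qed
  then have "emeasure (count_space UNIV) {i. ennreal (f n) < ennreal \<bar>f i\<bar>}
      \<le> emeasure (count_space UNIV) {..<n}"
    by (intro emeasure_mono) auto
  then have "emeasure (count_space UNIV) {i. ennreal (f n) < ennreal \<bar>f i\<bar>} \<le> of_nat n" by simp
  then show "Inf {s. emeasure (count_space UNIV) {i. s < ennreal \<bar>f i\<bar>} \<le> of_nat n} \<le> ennreal (f n)"
    by (intro Inf_lower) simp
next
  show "ennreal (f n) \<le> Inf {s. emeasure (count_space UNIV) {i. s < ennreal \<bar>f i\<bar>} \<le> of_nat n}"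
  proof (rule Inf_greatest, rule ccontr)
    fix s assume s: "s \<in> {s. emeasure (count_space UNIV) {i. s < ennreal \<bar>f i\<bar>} \<le> of_nat n}"
      and "\<not> ennreal (f n) \<le> s"
    have "{..n} \<subseteq> {i. s < ennreal \<bar>f i\<bar>}"
    proof clarsimp
      fix i assume "i \<le> n"
      then have "ennreal (f n) \<le> ennreal \<bar>f i\<bar>" using dec nonneg[of i] by (simp add: decseq_def ennreal_leI)
      then show "s < ennreal \<bar>f i\<bar>" using \<open>\<not> ennreal (f n) \<le> s\<close> by (metis not_le order.strict_trans2)
    qed
    then have "emeasure (count_space UNIV) {..n} \<le> emeasure (count_space UNIV) {i. s < ennreal \<bar>f i\<bar>}"
      by (intro emeasure_mono) auto
    then have "of_nat (Suc n) \<le> emeasure (count_space UNIV) {i. s < ennreal \<bar>f i\<bar>}" by simp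
    moreover have "emeasure (count_space UNIV) {i. s < ennreal \<bar>f i\<bar>} \<le> of_nat n" using s by simp
    ultimately have "of_nat (Suc n) \<le> (of_nat n :: ennreal)" by (rule order_trans)
    then show False by (simp only: of_nat_le_iff)
  qed
qed

text \<open>On a level interval of \<open>h w\<close> with \<open>h\<close> decreasing, the average dominates the first value
  \<open>h a\<close> but is also an average of values \<open>\<le> h a\<close>, so \<open>h\<close> is constant there.\<close>

lemma slevel_int_const:
  assumes wpos: "\<And>i. 0 < w i" and hnn: "\<And>i. 0 \<le> h i" and dec: "decseq h"
    and level: "slevel_int w (\<lambda>i. ennreal (h i * w i)) a b"
  shows "\<forall>j. a \<le> j \<and> j < b \<longrightarrow> h j = h a"
    and "Gsum (\<lambda>i. ennreal (h i * w i)) a b / Wsum w a b = ennreal (h a)"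
proof -
  have ab: "a < b" using level by (simp add: slevel_int_def)
  have wnn: "\<And>i. 0 \<le> w i" using wpos less_imp_le by blast
  define G where "G t = (\<Sum>i\<in>{a..<t}. h i * w i)" for t
  define W where "W t = (\<Sum>i\<in>{a..<t}. w i)" for t
  have Wpos: "0 < W t" if "a < t" for t unfolding W_def using that wpos by (intro sum_pos) auto
  have Gnn: "0 \<le> G t" for t unfolding G_def using hnn wnn by (intro sum_nonneg) simp
  have ratio: "Gsum (\<lambda>i. ennreal (h i * w i)) a t / Wsum w a t = ennreal (G t / W t)" if "a < t" for t
  proof -
    have "Gsum (\<lambda>i. ennreal (h i * w i)) a t = ennreal (G t)"
      unfolding Gsum_def G_def using hnn wnn by simp
    moreover have "Wsum w a t = ennreal (W t)"
      unfolding Wsum_def W_def using wnn by simp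
    ultimately show ?thesis using divide_ennreal[OF Gnn Wpos[OF that]] by simp
  qed
  have "Gsum (\<lambda>i. ennreal (h i * w i)) a (Suc a) / Wsum w a (Suc a)
      \<le> Gsum (\<lambda>i. ennreal (h i * w i)) a b / Wsum w a b"
  proof -
    have "a < Suc a \<and> Suc a \<le> b" using ab by simp
    then show ?thesis using level unfolding slevel_int_def by blast
  qed
  then have "ennreal (G (Suc a) / W (Suc a)) \<le> ennreal (G b / W b)"
    using ratio[of "Suc a"] ratio[OF ab] by simp
  moreover have "G (Suc a) / W (Suc a) = h a" using wpos[of a] by (simp add: G_def W_def)
  moreover have nonneg: "0 \<le> G b / W b" using Gnn[of b] Wpos[OF ab] by simp
  ultimately have ha: "h a \<le> G b / W b" using ennreal_le_iff[OF nonneg] by metis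
  have below: "h i * w i \<le> h a * w i" if "i \<in> {a..<b}" for i
  proof -
    have "h i \<le> h a" using dec that by (simp add: decseq_def)
    then show ?thesis using wnn[of i] by (rule mult_right_mono)
  qed
  have "G b \<le> h a * W b" unfolding G_def W_def sum_distrib_left by (rule sum_mono) (rule below)
  moreover have "h a * W b \<le> G b" using ha Wpos[OF ab] by (simp add: le_divide_eq)
  ultimately have eq: "G b = h a * W b" by simp
  then show "Gsum (\<lambda>i. ennreal (h i * w i)) a b / Wsum w a b = ennreal (h a)"
    using ratio[OF ab] Wpos[OF ab] by simp
  from eq have "(\<Sum>i\<in>{a..<b}. h a * w i - h i * w i) = 0"
    by (simp add: G_def W_def sum_subtractf sum_distrib_left)
  then have zero: "h a * w i - h i * w i = 0" if "i \<in> {a..<b}" for i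
    using below that by (subst (asm) sum_nonneg_eq_0_iff) auto
  show "\<forall>j. a \<le> j \<and> j < b \<longrightarrow> h j = h a"
  proof (intro allI impI)
    fix j assume "a \<le> j \<and> j < b"
    then have "(h a - h j) * w j = 0" using zero[of j] by (simp add: left_diff_distrib)
    then show "h j = h a" using wpos[of j] by simp
  qed
qed

lemma slevel_fun_eq:
  assumes wpos: "\<And>i. 0 < w i" and hnn: "\<And>i. 0 \<le> h i" and dec: "decseq h"
  shows "slevel_fun w (\<lambda>i. ennreal (h i * w i)) i = ennreal (h i * w i)"
proof (cases "\<exists>a b. smax_level_int w (\<lambda>i. ennreal (h i * w i)) a b \<and> a \<le> i \<and> i < b")
  case True
  let ?P = "\<lambda>p. smax_level_int w (\<lambda>i. ennreal (h i * w i)) (fst p) (snd p) \<and> fst p \<le> i \<and> i < snd p"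
  obtain a b where ab: "(SOME p. ?P p) = (a, b)" by fastforce
  have "?P (a, b)" using someI_ex[of ?P] True ab by auto
  then have level: "slevel_int w (\<lambda>i. ennreal (h i * w i)) a b" and "a \<le> i" "i < b"
    by (simp_all add: smax_level_int_def)
  then have "h i = h a" using slevel_int_const(1)[OF wpos hnn dec level] by blast
  have "slevel_fun w (\<lambda>i. ennreal (h i * w i)) i
      = Gsum (\<lambda>i. ennreal (h i * w i)) a b / Wsum w a b * ennreal (w i)"
    unfolding slevel_fun_def using True ab by simp
  also have "\<dots> = ennreal (h i * w i)"
    using slevel_int_const(2)[OF wpos hnn dec level] \<open>h i = h a\<close> hnn[of i] wpos[of i]
    by (simp add: ennreal_mult)
  finally show ?thesis .
next
  case False
  then show ?thesis unfolding slevel_fun_def by (rule if_not_P)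
qed

lemma qseq_eq_suminf:
  assumes \<phi>: "orlicz_fun \<phi>" and "weight_seq w" and hnn: "\<And>i. 0 \<le> h i" and dec: "decseq h"
  shows "qseq \<phi> w (\<lambda>i. h i * w i) = (\<Sum>i. ennreal (\<phi> (h i) * w i))"
proof -
  have wpos: "\<And>i. 0 < w i" and wdec: "decseq w" using assms(2) by (auto simp: weight_seq_def)
  then have wnn: "\<And>i. 0 \<le> w i" using less_imp_le by blast
  have "decseq (\<lambda>i. h i * w i)"
    using dec wdec hnn wnn by (auto simp: decseq_def intro!: mult_mono)
  then have "sdrearr (\<lambda>i. h i * w i) = (\<lambda>i. ennreal (h i * w i))"
    using sdrearr_decseq hnn wnn by (simp add: fun_eq_iff)
  moreover have "phi_ext \<phi> (ennreal (h i * w i) / ennreal (w i)) * ennreal (w i)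
      = ennreal (\<phi> (h i) * w i)" for i
    using divide_ennreal[of "h i * w i" "w i"] hnn[of i] wpos[of i] orlicz_fun_nonneg[OF \<phi> hnn[of i]]
    by (simp add: phi_ext_def ennreal_mult)
  ultimately show ?thesis
    unfolding qseq_def using slevel_fun_eq[OF wpos hnn dec] by simp
qed

lemma weight_blocks:
  fixes w L :: "nat \<Rightarrow> real"
  assumes wpos: "\<And>i. 0 < w i" and wsum: "(\<Sum>i. ennreal (w i)) = top"
    and Lpos: "\<And>n. 0 < L n" and wL: "\<And>i n. w i \<le> L n"
  obtains c where "strict_mono c" "c 0 = 0"
    "\<And>n. L n \<le> (\<Sum>i\<in>{c n..<c (Suc n)}. w i)" "\<And>n. (\<Sum>i\<in>{c n..<c (Suc n)}. w i) \<le> 2 * L n"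
proof -
  have wnn: "\<And>i. 0 \<le> w i" using wpos less_imp_le by blast
  have unbounded: "\<exists>m. B < (\<Sum>i<m. w i)" for B
  proof (rule ccontr)
    assume "\<not> ?thesis"
    then have "(\<Sum>i<m. ennreal (w i)) \<le> ennreal B" for m
      using wnn by (subst sum_ennreal) (auto simp: not_less intro: ennreal_leI)
    then have "(\<Sum>i. ennreal (w i)) \<le> ennreal B" by (intro suminf_le_const) auto
    then show False using wsum by (simp add: top_unique)
  qed
  have block: "\<exists>m. k < m \<and> L n \<le> (\<Sum>i\<in>{k..<m}. w i) \<and> (\<Sum>i\<in>{k..<m}. w i) \<le> 2 * L n" for k n
  proof -
    let ?P = "\<lambda>m. L n \<le> (\<Sum>i\<in>{k..<m}. w i)"
    obtain M where M: "L n + (\<Sum>i<k. w i) < (\<Sum>i<M. w i)" using unbounded by blast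
    have "(\<Sum>i<M. w i) \<le> (\<Sum>i<max k M. w i)"
      using wnn by (intro sum_mono2) auto
    also have "\<dots> = (\<Sum>i<k. w i) + (\<Sum>i\<in>{k..<max k M}. w i)"
      by (simp add: lessThan_atLeast0 sum.atLeastLessThan_concat)
    finally have "?P (max k M)" using M by simp
    define m where "m = (LEAST m. ?P m)"
    have Pm: "?P m" unfolding m_def using \<open>?P (max k M)\<close> by (rule LeastI)
    then obtain m' where m': "m = Suc m'" using Lpos[of n] by (cases m) auto
    have "\<not> ?P m'" using not_less_Least[of m' ?P] m' by (simp add: m_def)
    moreover have km: "k < m"
    proof (rule ccontr)
      assume "\<not> k < m"
      then show False using Pm Lpos[of n] by simp
    qed
    ultimately have "(\<Sum>i\<in>{k..<m}. w i) \<le> 2 * L n"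
      using m' wL[of m' n] by simp
    then show ?thesis using km Pm by blast
  qed
  have "\<exists>c. \<forall>n. (n = 0 \<longrightarrow> c n = 0) \<and> (c n < c (Suc n) \<and> L n \<le> (\<Sum>i\<in>{c n..<c (Suc n)}. w i)
      \<and> (\<Sum>i\<in>{c n..<c (Suc n)}. w i) \<le> 2 * L n)"
  proof (rule dependent_nat_choice)
    show "\<exists>y. (Suc n = 0 \<longrightarrow> y = 0) \<and> (k < y \<and> L n \<le> (\<Sum>i\<in>{k..<y}. w i)
        \<and> (\<Sum>i\<in>{k..<y}. w i) \<le> 2 * L n)" for k n
      using block[of k n] by simp
  qed simp
  then obtain c where "c 0 = 0" "\<And>n. c n < c (Suc n)" "\<And>n. L n \<le> (\<Sum>i\<in>{c n..<c (Suc n)}. w i)"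
    "\<And>n. (\<Sum>i\<in>{c n..<c (Suc n)}. w i) \<le> 2 * L n"
    by blast
  then show ?thesis using that[of c] by (simp add: strict_mono_Suc_iff)
qed

lemma step_sequence:
  fixes c :: "nat \<Rightarrow> nat" and v :: "nat \<Rightarrow> real"
  assumes c: "strict_mono c" "c 0 = 0" and "decseq v"
  obtains h where "decseq h" "\<And>n i. i \<in> {c n..<c (Suc n)} \<Longrightarrow> h i = v n" "\<And>i. h i \<in> range v"
proof
  define blk where "blk i = (THE n. c n \<le> i \<and> i < c (Suc n))" for i
  have index: "\<exists>!n. c n \<le> i \<and> i < c (Suc n)" for i
    using strict_mono_Ico_index[OF c(1), of i "Suc i"] c(2)
      strict_mono_imp_increasing[OF c(1), of "Suc i"] by simp
  have blk: "c (blk i) \<le> i \<and> i < c (Suc (blk i))" for i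
    unfolding blk_def using index by (rule theI')
  show "v (blk i) = v n" if "i \<in> {c n..<c (Suc n)}" for n i
    unfolding blk_def using index that by (subst the1_equality) auto
  show "v (blk i) \<in> range v" for i by simp
  show "decseq (\<lambda>i. v (blk i))"
  proof (rule antimonoI)
    fix i j :: nat assume "i \<le> j"
    then have "c (blk i) < c (Suc (blk j))" using blk[of i] blk[of j] by linarith
    then have "blk i \<le> blk j" using strict_mono_less[OF c(1)] by simp
    then show "v (blk j) \<le> v (blk i)" using \<open>decseq v\<close> by (simp add: decseq_def)
  qed
qed

lemma qseq_step_sequence:
  assumes \<phi>: "orlicz_fun \<phi>" and W: "weight_seq w" and c: "strict_mono c" "c 0 = 0"
    and h: "decseq h" "\<And>i. 0 \<le> h i" and block: "\<And>n i. i \<in> {c n..<c (Suc n)} \<Longrightarrow> h i = v n"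
  shows "qseq \<phi> w (\<lambda>i. h i * w i) = (\<Sum>n. ennreal (\<phi> (v n) * (\<Sum>i\<in>{c n..<c (Suc n)}. w i)))"
proof -
  have wnn: "0 \<le> w i" for i using W by (simp add: weight_seq_def less_imp_le)
  have "qseq \<phi> w (\<lambda>i. h i * w i) = (\<Sum>i. ennreal (\<phi> (h i) * w i))"
    using qseq_eq_suminf[OF \<phi> W h(2,1)] .
  also have "\<dots> = (\<Sum>n. \<Sum>i\<in>{c n..<c (Suc n)}. ennreal (\<phi> (v n) * w i))"
  proof (subst suminf_ennreal_blocks[OF c], intro suminf_cong sum.cong refl)
    fix n i assume "i \<in> {c n..<c (Suc n)}"
    then show "ennreal (\<phi> (h i) * w i) = ennreal (\<phi> (v n) * w i)" by (simp add: block)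
  qed
  also have "\<dots> = (\<Sum>n. ennreal (\<phi> (v n) * (\<Sum>i\<in>{c n..<c (Suc n)}. w i)))"
  proof (intro suminf_cong)
    fix n
    have "c n \<in> {c n..<c (Suc n)}" using strict_monoD[OF c(1), of n "Suc n"] by simp
    then have "0 \<le> \<phi> (v n)" using block h(2) orlicz_fun_nonneg[OF \<phi>] by metis
    then show "(\<Sum>i\<in>{c n..<c (Suc n)}. ennreal (\<phi> (v n) * w i))
        = ennreal (\<phi> (v n) * (\<Sum>i\<in>{c n..<c (Suc n)}. w i))"
      using wnn by (subst sum_ennreal) (simp_all add: sum_distrib_left)
  qed
  finally show ?thesis .
qed

text \<open>Blocks of consecutive indices with \<open>w\<close>-mass between \<open>L\<^sub>n = 1/\<phi>(\<rho>\<^sub>n v\<^sub>n)\<close> and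
  \<open>2L\<^sub>n\<close>, on which the sequence is \<open>v\<^sub>n\<close>; the bound \<open>\<phi>(\<rho>\<^sub>n v\<^sub>n) \<le> 1/w\<^sub>0\<close> keeps every
  single weight below \<open>L\<^sub>n\<close>.\<close>

lemma seq_counterexample:
  assumes \<phi>: "orlicz_fun \<phi>" and W: "weight_seq w" and nD: "\<not> Delta2_zero \<phi>"
  shows "\<exists>f\<in>mseq \<phi> w. qseq \<phi> w f \<le> 1 \<and> (\<forall>r>(1::real). qseq \<phi> w (\<lambda>i. r * f i) = top)"
proof -
  have wpos: "\<And>i. 0 < w i" and wdec: "decseq w" and wsum: "(\<Sum>i. ennreal (w i)) = top"
    using W by (auto simp: weight_seq_def)
  define \<rho> where "\<rho> n = 1 + inverse (real (Suc n))" for n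
  have \<rho>: "\<And>n. 1 < \<rho> n" "\<rho> \<longlonglongrightarrow> 1"
    using LIMSEQ_inverse_real_of_nat_add[of 1] by (simp_all add: \<rho>_def[abs_def])
  obtain v where "decseq v" and vpos: "\<And>n. 0 < v n"
    and jump: "\<And>n. 2 ^ (n + 2) * \<phi> (v n) < \<phi> (\<rho> n * v n)"
    and bound: "\<And>n. \<phi> (\<rho> n * v n) \<le> 1 / w 0"
    using not_Delta2_zero_jump_seq[where \<rho>=\<rho> and B="1 / w 0" and K="\<lambda>n. 2 ^ (n + 2)", OF \<phi> nD \<rho>(1)]
      wpos[of 0] by auto
  have vnn: "\<And>n. 0 \<le> v n" using vpos less_imp_le by blast
  have \<phi>\<rho>pos: "0 < \<phi> (\<rho> n * v n)" for n
    using orlicz_fun_pos[OF \<phi>] vpos[of n] \<rho>(1)[of n] by simp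
  define L where "L n = 1 / \<phi> (\<rho> n * v n)" for n
  have "w i \<le> L n" for i n
    using wdec[unfolded decseq_def, rule_format, of 0 i] bound[of n] \<phi>\<rho>pos[of n] wpos[of 0]
    by (simp add: L_def field_simps) (meson mult_right_mono order.trans less_imp_le)
  then obtain c where c: "strict_mono c" "c 0 = 0"
    and S: "\<And>n. L n \<le> (\<Sum>i\<in>{c n..<c (Suc n)}. w i)" "\<And>n. (\<Sum>i\<in>{c n..<c (Suc n)}. w i) \<le> 2 * L n"
    using weight_blocks[OF wpos wsum, of L] \<phi>\<rho>pos by (auto simp: L_def)
  define S where "S n = (\<Sum>i\<in>{c n..<c (Suc n)}. w i)" for n
  obtain h where h: "decseq h" "\<And>n i. i \<in> {c n..<c (Suc n)} \<Longrightarrow> h i = v n" "\<And>i. h i \<in> range v"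
    using step_sequence[OF c \<open>decseq v\<close>] by blast
  have series: "qseq \<phi> w (\<lambda>i. r * (h i * w i)) = (\<Sum>n. ennreal (\<phi> (r * v n) * S n))"
    if "0 \<le> r" for r
  proof -
    have "decseq (\<lambda>i. r * h i)" using h(1) that by (simp add: decseq_def mult_left_mono)
    moreover have "0 \<le> r * h i" for i using h(3)[of i] vnn that by auto
    ultimately show ?thesis
      using qseq_step_sequence[OF \<phi> W c, of "\<lambda>i. r * h i" "\<lambda>n. r * v n"] h(2)
      by (simp add: S_def mult.assoc)
  qed
  have "\<phi> (v n) * S n \<le> (1/2) ^ Suc n" for n
  proof -
    have "\<phi> (v n) * S n \<le> \<phi> (v n) * (2 * L n)"
      using S(2)[of n] orlicz_fun_nonneg[OF \<phi> vnn[of n]] by (simp add: S_def mult_left_mono)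
    also have "\<dots> \<le> 2 * (\<phi> (\<rho> n * v n) / 2 ^ (n + 2)) / \<phi> (\<rho> n * v n)"
      using jump[of n] \<phi>\<rho>pos[of n] by (simp add: L_def field_simps)
    also have "\<dots> = (1/2) ^ Suc n" using \<phi>\<rho>pos[of n] by (simp add: field_simps power_add)
    finally show ?thesis .
  qed
  moreover have "1 \<le> \<phi> (\<rho> n * v n) * S n" for n
    using S(1)[of n] \<phi>\<rho>pos[of n] by (simp add: S_def L_def field_simps)
  moreover have "0 \<le> S n" for n unfolding S_def using wpos by (intro sum_nonneg) (simp add: order_less_imp_le)
  ultimately have small: "(\<Sum>n. ennreal (\<phi> (v n) * S n)) \<le> 1"
    and big: "\<And>r. 1 < r \<Longrightarrow> (\<Sum>n. ennreal (\<phi> (r * v n) * S n)) = top"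
    using orlicz_step_series[OF \<phi> \<rho>(2) vnn] by simp_all
  have "qseq \<phi> w (\<lambda>i. h i * w i) \<le> 1" using series[of 1] small by simp
  moreover from this have "(\<lambda>i. h i * w i) \<in> mseq \<phi> w"
    unfolding mseq_def using le_less_trans[OF _ ennreal_one_less_top] by (auto intro!: exI[of _ 1])
  moreover have "qseq \<phi> w (\<lambda>i. r * (h i * w i)) = top" if "1 < r" for r
    using series[of r] big[OF that] that by simp
  ultimately show ?thesis by blast
qed

section \<open>The weight on \<open>I\<close>\<close>

lemma Iset_cases:
  assumes "0 < \<gamma>"
  obtains (infinite) "\<gamma> = \<infinity>" "Iset \<gamma> = {0..}"
    | (finite) g where "\<gamma> = ereal g" "0 < g" "Iset \<gamma> = {0..<g}"
proof (cases \<gamma>)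
  case (real g)
  then have "Iset \<gamma> = {0..<g}" by (auto simp: Iset_def)
  with real show ?thesis using assms finite by simp
qed (use assms infinite in \<open>auto simp: Iset_def\<close>)

lemma Iset_in_borel [measurable]: "0 < \<gamma> \<Longrightarrow> Iset \<gamma> \<in> sets borel"
  by (cases rule: Iset_cases) auto

lemma zero_in_Iset: "0 < \<gamma> \<Longrightarrow> 0 \<in> Iset \<gamma>"
  by (simp add: Iset_def zero_ereal_def)

lemma Iset_downward_closed: "y \<in> Iset \<gamma> \<Longrightarrow> 0 \<le> x \<Longrightarrow> x \<le> y \<Longrightarrow> x \<in> Iset \<gamma>"
  by (auto simp: Iset_def) (meson ereal_less_eq(3) le_less_trans)

lemma in_Iset_if_below: "0 \<le> x \<Longrightarrow> x < t \<Longrightarrow> ereal t \<le> \<gamma> \<Longrightarrow> x \<in> Iset \<gamma>"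
  using less_le_trans[of "ereal x" "ereal t" \<gamma>] by (simp add: Iset_def)

lemma Iset_right_neighbour:
  assumes "0 < \<gamma>" "x \<in> Iset \<gamma>" "0 < \<delta>"
  obtains y where "x < y" "y < x + \<delta>" "y \<in> Iset \<gamma>"
  using assms(1)
proof (cases rule: Iset_cases)
  case infinite then show ?thesis using assms that[of "x + \<delta> / 2"] by auto
next
  case (finite g)
  then show ?thesis using assms that[of "x + min \<delta> (g - x) / 2"] by (auto simp: min_def field_simps)
qed

lemma AE_ereal_neq: "AE x in lborel. ereal x \<noteq> \<gamma>"
proof (cases \<gamma>)
  case (real g)
  have "{g} \<in> null_sets lborel" by (rule countable_imp_null_set_lborel) simp
  then show ?thesis using real by (intro AE_I'[of "{g}"]) auto
qed auto

locale weighted_interval =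
  fixes \<gamma> :: ereal and w :: "real \<Rightarrow> real"
  assumes gamma_pos: "0 < \<gamma>" and weight: "weight_fun \<gamma> w"
begin

abbreviation "I \<equiv> Iset \<gamma>"

definition wI :: "real \<Rightarrow> real" where "wI x = indicator I x * w x"

lemma w_pos: "x \<in> I \<Longrightarrow> 0 < w x"
  using weight by (auto simp: weight_fun_def)

lemma w_antimono: "x \<in> I \<Longrightarrow> y \<in> I \<Longrightarrow> x \<le> y \<Longrightarrow> w y \<le> w x"
  using weight by (auto simp: weight_fun_def)

lemma wI_nonneg: "0 \<le> wI x"
  by (auto simp: wI_def indicator_def less_imp_le w_pos)

lemma wI_eq: "x \<in> I \<Longrightarrow> wI x = w x"
  by (simp add: wI_def)

lemma wI_measurable [measurable]: "wI \<in> borel_measurable borel"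
proof -
  have "mono_on I (\<lambda>x. - w x)" by (auto intro!: mono_onI simp: w_antimono)
  then have "(\<lambda>x. - w x) \<in> borel_measurable (restrict_space borel I)"
    by (rule borel_measurable_mono_on_fnc)
  then have "(\<lambda>x. - (- w x)) \<in> borel_measurable (restrict_space borel I)" by measurable
  then have "(\<lambda>x. indicator I x *\<^sub>R w x) \<in> borel_measurable borel"
    using gamma_pos by (subst borel_measurable_restrict_space_iff[symmetric]) auto
  then show ?thesis by (simp add: wI_def[abs_def])
qed

lemma wI_antimono: "0 < x \<Longrightarrow> x \<le> y \<Longrightarrow> wI y \<le> wI x"
proof (cases "y \<in> I")
  case True
  assume "0 < x" "x \<le> y"
  then have "x \<in> I" using Iset_downward_closed[OF True] by simp
  then show ?thesis using True w_antimono \<open>x \<le> y\<close> by (simp add: wI_eq)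
qed (use wI_nonneg[of x] in \<open>simp add: wI_def\<close>)

definition Wmass :: "real \<Rightarrow> real \<Rightarrow> ennreal" where
  "Wmass s t = (\<integral>\<^sup>+x\<in>{s<..t}. ennreal (wI x) \<partial>lborel)"

lemma Wmass_split: "s \<le> x \<Longrightarrow> x \<le> t \<Longrightarrow> Wmass s t = Wmass s x + Wmass x t"
proof -
  assume "s \<le> x" "x \<le> t"
  then have "{s<..t} = {s<..x} \<union> {x<..t}" by auto
  then show ?thesis unfolding Wmass_def by (simp add: nn_integral_disjoint_pair)
qed

lemma Wmass_mono_left: "0 \<le> s \<Longrightarrow> Wmass s t \<le> Wmass 0 t"
  unfolding Wmass_def by (intro nn_integral_mono) (auto split: split_indicator)

lemma Wmass_le_const:
  assumes "e \<in> I" "0 < e" "e \<le> s"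
  shows "Wmass s t \<le> ennreal (w e) * emeasure lborel {s<..t}"
proof -
  have "Wmass s t \<le> (\<integral>\<^sup>+x. ennreal (w e) * indicator {s<..t} x \<partial>lborel)"
    unfolding Wmass_def
    using wI_antimono[of e] assms
    by (intro nn_integral_mono) (auto simp: wI_eq split: split_indicator intro!: ennreal_leI)
  then show ?thesis by (simp add: nn_integral_cmult_indicator)
qed

lemma Wmass_ge_const:
  assumes "t0 \<in> I" "0 \<le> s" "t \<le> t0"
  shows "ennreal (w t0) * emeasure lborel {s<..t} \<le> Wmass s t"
proof -
  have "(\<integral>\<^sup>+x. ennreal (w t0) * indicator {s<..t} x \<partial>lborel) \<le> Wmass s t"
    unfolding Wmass_def using wI_antimono[of _ t0] assms
    by (intro nn_integral_mono) (auto simp: wI_eq split: split_indicator intro!: ennreal_leI)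
  then show ?thesis by (simp add: nn_integral_cmult_indicator)
qed

lemma w_integrable_on: "x \<in> I \<Longrightarrow> w integrable_on {0..x}"
  using weight set_lebesgue_integral_eq_integral(1) unfolding weight_fun_def by blast

lemma Wmass_eq_integral:
  assumes "x \<in> I"
  shows "Wmass 0 x = ennreal (integral {0..x} w)"
proof -
  have "w integrable_on {0..x}" using assms by (rule w_integrable_on)
  moreover have "0 \<le> w y" if "y \<in> {0..x}" for y
    using that w_pos[of y] Iset_downward_closed[OF assms] by (simp add: less_imp_le)
  ultimately have "(\<integral>\<^sup>+y. ennreal (w y) * indicator {0..x} y \<partial>lborel) = ennreal (integral {0..x} w)"
    by (intro nn_integral_has_integral_lebesgue') (auto intro: integrable_integral)
  moreover have "AE y in lborel. y \<noteq> 0"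
    by (intro AE_I'[of "{0}"]) (auto intro: countable_imp_null_set_lborel)
  then have "Wmass 0 x = (\<integral>\<^sup>+y. ennreal (w y) * indicator {0..x} y \<partial>lborel)"
    unfolding Wmass_def
    by (intro nn_integral_cong_AE, eventually_elim)
      (use Iset_downward_closed[OF assms] in \<open>auto simp: wI_eq split: split_indicator\<close>)
  ultimately show ?thesis by simp
qed

lemma Wmass_finite:
  assumes "0 \<le> s" "ereal t \<le> \<gamma>"
  shows "Wmass s t < \<infinity>"
proof (cases "0 < t")
  case True
  define m where "m = t / 2"
  have m: "m \<in> I" "0 < m" "m \<le> t"
    using True assms in_Iset_if_below[of m t] by (auto simp: m_def)
  have "Wmass s t \<le> Wmass 0 t" using Wmass_mono_left[OF assms(1)] .
  also have "\<dots> = Wmass 0 m + Wmass m t" using Wmass_split[of 0 m t] m by simp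
  also have "\<dots> \<le> ennreal (integral {0..m} w) + ennreal (w m) * emeasure lborel {m<..t}"
    using Wmass_eq_integral[OF m(1)] Wmass_le_const[OF m(1,2)] by (intro add_mono) auto
  also have "\<dots> < \<infinity>" using m by (simp add: ennreal_mult_less_top)
  finally show ?thesis .
next
  case False
  then show ?thesis using assms by (simp add: Wmass_def)
qed

lemma Wmass_pos:
  assumes "0 \<le> s" "s < t" "ereal t \<le> \<gamma>"
  shows "0 < Wmass s t"
proof -
  define m where "m = (s + t) / 2"
  have m: "m \<in> I" "s < m" "m < t" using assms in_Iset_if_below[of m t] by (auto simp: m_def)
  have "0 < ennreal (w m) * emeasure lborel {s<..m}"
    using w_pos[OF m(1)] m by (simp add: ennreal_zero_less_mult_iff)
  also have "\<dots> \<le> Wmass s m" using Wmass_ge_const[OF m(1) assms(1)] by simp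
  also have "\<dots> \<le> Wmass s t" using Wmass_split[of s m t] m by simp
  finally show ?thesis .
qed

definition Wc :: "real \<Rightarrow> real" where "Wc t = enn2real (Wmass 0 t)"

lemma Wc_0: "Wc 0 = 0"
  by (simp add: Wc_def Wmass_def)

lemma Wc_nonneg: "0 \<le> Wc t"
  by (simp add: Wc_def)

lemma Wmass_eq_Wc_diff:
  assumes "0 \<le> s" "s \<le> t" "ereal t \<le> \<gamma>"
  shows "Wmass s t = ennreal (Wc t - Wc s)"
proof -
  have "ereal s \<le> \<gamma>" using assms by (metis ereal_less_eq(3) order_trans)
  then have fin: "Wmass 0 s < \<infinity>" "Wmass s t < \<infinity>" using Wmass_finite assms by auto
  have "Wmass 0 t = Wmass 0 s + Wmass s t" using assms by (intro Wmass_split) auto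
  then have "Wc t = Wc s + enn2real (Wmass s t)"
    unfolding Wc_def using fin by (simp add: enn2real_plus)
  then show ?thesis using fin by simp
qed

lemma Wc_mono:
  assumes "0 \<le> s" "s \<le> t" "ereal t \<le> \<gamma>"
  shows "Wc s \<le> Wc t"
  using Wmass_eq_Wc_diff[OF assms] ennreal_eq_0_iff[of "Wc t - Wc s"]
    Wmass_pos[OF assms(1) _ assms(3)] assms(2) by (cases "s = t") auto

lemma Wc_strict_mono:
  assumes "0 \<le> s" "s < t" "ereal t \<le> \<gamma>"
  shows "Wc s < Wc t"
  using Wmass_pos[OF assms] Wmass_eq_Wc_diff[of s t] assms by simp

lemma Wc_continuous_on:
  assumes "b \<in> I"
  shows "continuous_on {0..b} Wc"
proof -
  have "w integrable_on {0..b}" using assms by (rule w_integrable_on)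
  then have "continuous_on {0..b} (\<lambda>x. integral {0..x} w)"
    by (rule indefinite_integral_continuous_1)
  moreover have "integral {0..x} w = Wc x" if "x \<in> {0..b}" for x
  proof -
    have x: "x \<in> I" using that Iset_downward_closed[OF assms] by simp
    have "0 \<le> integral {0..x} w"
      using w_pos Iset_downward_closed[OF x]
      by (intro integral_nonneg integrable_on_subinterval[OF \<open>w integrable_on {0..b}\<close>])
        (use that in \<open>auto intro: less_imp_le\<close>)
    then show ?thesis using Wmass_eq_integral[OF x] by (simp add: Wc_def)
  qed
  ultimately show ?thesis by (rule continuous_on_eq)
qed

lemma Wc_attains:
  assumes "b \<in> I" "0 \<le> y" "y \<le> Wc b"
  obtains s where "0 \<le> s" "s \<le> b" "Wc s = y"
  using IVT'[of Wc 0 y b] Wc_continuous_on[OF assms(1)] Wc_0 assms by (auto simp: Iset_def)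

lemma Wc_ge_linear:
  assumes "t0 \<in> I" "0 \<le> s" "s \<le> t0"
  shows "w t0 * s \<le> Wc s"
proof -
  have "ereal s \<le> \<gamma>" using assms Iset_downward_closed[OF assms(1)] by (auto simp: Iset_def less_imp_le)
  then have "ennreal (w t0 * s) \<le> ennreal (Wc s)"
    using Wmass_ge_const[of t0 0 s] Wmass_eq_Wc_diff[of 0 s] w_pos[OF assms(1)] assms
    by (simp add: Wc_0 ennreal_mult)
  then show ?thesis using ennreal_le_iff[OF Wc_nonneg] by simp
qed

lemma Wc_unbounded:
  assumes "\<gamma> = \<infinity>"
  shows "\<exists>S\<ge>0. B \<le> Wc S"
proof (rule ccontr)
  assume "\<not> ?thesis"
  then have bound: "Wc S < B" if "0 \<le> S" for S using that by (meson not_le)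
  have Ieq: "I = {0..}" using assms by (auto simp: Iset_def)
  define F where "F k x = ennreal (wI x) * indicator {0<..real k} x" for k x
  have "incseq F"
    by (rule incseq_SucI, rule le_funI) (auto simp: F_def split: split_indicator)
  have F_measurable: "F k \<in> borel_measurable borel" for k unfolding F_def by measurable
  have sup: "(SUP k. F k x) = ennreal (wI x) * indicator {0<..} x" for x
  proof (rule antisym)
    show "(SUP k. F k x) \<le> ennreal (wI x) * indicator {0<..} x"
      by (rule SUP_least) (auto simp: F_def split: split_indicator)
    obtain k :: nat where "x \<le> real k" using real_arch_simple by blast
    then have "ennreal (wI x) * indicator {0<..} x = F k x" by (simp add: F_def indicator_def)
    then show "ennreal (wI x) * indicator {0<..} x \<le> (SUP k. F k x)" by (metis SUP_upper UNIV_I)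
  qed
  have "(\<integral>\<^sup>+x. ennreal (wI x) * indicator {0<..} x \<partial>lborel) = (SUP k. integral\<^sup>N lborel (F k))"
    using nn_integral_monotone_convergence_SUP[OF \<open>incseq F\<close>, of lborel] F_measurable sup
    by (simp add: F_def)
  also have "\<dots> \<le> ennreal B"
  proof (rule SUP_least)
    fix k
    have "ereal (real k) \<le> \<gamma>" using assms by simp
    then have "integral\<^sup>N lborel (F k) = ennreal (Wc (real k))"
      using Wmass_eq_Wc_diff[of 0 "real k"] by (simp add: F_def[abs_def] Wmass_def Wc_0)
    then show "integral\<^sup>N lborel (F k) \<le> ennreal B"
      using bound[of "real k"] by (simp add: ennreal_leI less_imp_le)
  qed
  finally have "(\<integral>\<^sup>+x. ennreal (wI x) * indicator {0<..} x \<partial>lborel) < \<infinity>"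
    using le_less_trans by fastforce
  moreover have "AE x in lborel. x \<noteq> 0"
    by (intro AE_I'[of "{0}"]) (auto intro: countable_imp_null_set_lborel)
  then have "(\<integral>\<^sup>+x\<in>{0..}. ennreal (w x) \<partial>lebesgue) = (\<integral>\<^sup>+x. ennreal (wI x) * indicator {0<..} x \<partial>lborel)"
    unfolding nn_integral_completion
    by (intro nn_integral_cong_AE, eventually_elim) (auto simp: wI_def Ieq split: split_indicator)
  ultimately show False using weight assms by (simp add: weight_fun_def)
qed

text \<open>Partitions of \<open>(0, \<infinity>)\<close> resp. of \<open>(0, s\<^sub>0]\<close> into intervals of prescribed \<open>w\<close>-mass
  \<open>a\<^sub>n\<close>: the end points are \<open>W\<close>-preimages of the partial sums resp. of the tails of \<open>\<Sum> a\<^sub>n\<close>.\<close>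

lemma Wmass_partition_unbounded:
  assumes \<gamma>: "\<gamma> = \<infinity>" and a: "\<And>n. 1 \<le> a n"
  obtains s where "strict_mono s" "s 0 = 0" "\<And>x. 0 < x \<Longrightarrow> \<exists>n. x \<le> s n"
    "\<And>n. Wmass (s n) (s (Suc n)) = ennreal (a n)"
proof -
  have inI: "t \<in> I" "ereal t \<le> \<gamma>" if "0 \<le> t" for t using that \<gamma> by (simp_all add: Iset_def)
  define P where "P n = (\<Sum>k<n. a k)" for n
  have P: "real n \<le> P n" "P n < P (Suc n)" for n
  proof -
    show "real n \<le> P n" using a by (induction n) (simp_all add: P_def add.commute add_mono)
    show "P n < P (Suc n)" using a[of n] by (simp add: P_def)
  qed
  have "\<exists>s. 0 \<le> s \<and> Wc s = P n" for n
  proof -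
    obtain S where "0 \<le> S" "P n \<le> Wc S" using Wc_unbounded[OF \<gamma>] by blast
    moreover have "0 \<le> P n" using P(1)[of n] by simp
    ultimately show ?thesis using Wc_attains[of S "P n"] inI by metis
  qed
  then obtain s where s: "\<And>n. 0 \<le> s n" "\<And>n. Wc (s n) = P n" by metis
  have "strict_mono s"
  proof (rule strict_monoI_Suc, rule ccontr)
    fix n assume "\<not> s n < s (Suc n)"
    then have "Wc (s (Suc n)) \<le> Wc (s n)" using s inI by (intro Wc_mono) auto
    then show False using s(2) P(2)[of n] by simp
  qed
  moreover have "s 0 = 0"
  proof (rule ccontr)
    assume "s 0 \<noteq> 0"
    then have "Wc 0 < Wc (s 0)" using s(1)[of 0] inI[of "s 0"] by (intro Wc_strict_mono) auto
    then show False using s(2)[of 0] Wc_0 by (simp add: P_def)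
  qed
  moreover have "\<exists>n. x \<le> s n" if "0 < x" for x
  proof -
    obtain n :: nat where "Wc x < real n" using reals_Archimedean2 by blast
    then have "\<not> s n < x" using Wc_mono[of "s n" x] s inI P(1)[of n] that by force
    then show ?thesis by (auto simp: not_less)
  qed
  moreover have "Wmass (s n) (s (Suc n)) = ennreal (a n)" for n
    using Wmass_eq_Wc_diff[of "s n" "s (Suc n)"] s inI \<open>strict_mono s\<close>
    by (simp add: P_def strict_mono_less_eq)
  ultimately show ?thesis using that by blast
qed

lemma Wmass_partition_shrinking:
  assumes t0: "t0 \<in> I" and a: "\<And>n. 0 < a n" "summable a" "suminf a \<le> Wc t0"
  obtains s where "strict_mono (\<lambda>n. - s n)" "\<And>n. 0 < s n" "\<And>n. s n \<le> t0"
    "\<And>x. 0 < x \<Longrightarrow> \<exists>n. s n < x" "\<And>n. Wmass (s (Suc n)) (s n) = ennreal (a n)"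
proof -
  have inI: "t \<in> I" "ereal t \<le> \<gamma>" if "0 \<le> t" "t \<le> t0" for t
    using that Iset_downward_closed[OF t0] by (auto simp: Iset_def less_imp_le)
  have anonn: "0 \<le> a n" for n using a(1)[of n] by simp
  define R where "R n = suminf a - (\<Sum>k<n. a k)" for n
  have Rpos: "0 < R n" for n
    using suminf_minus_initial_segment[OF a(2), of n] a(1,2) suminf_pos[of "\<lambda>k. a (k + n)"]
    by (simp add: R_def)
  have R_le: "R n \<le> Wc t0" for n using a(3) sum_nonneg[of "{..<n}" a] anonn by (simp add: R_def)
  have R_diff: "R n - R (Suc n) = a n" for n by (simp add: R_def)
  have "R \<longlonglongrightarrow> 0"
    using tendsto_diff[OF tendsto_const[of "suminf a"] summable_LIMSEQ[OF a(2)]]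
    by (simp add: R_def[abs_def])
  have "\<exists>s. 0 \<le> s \<and> s \<le> t0 \<and> Wc s = R n" for n
    using Wc_attains[OF t0, of "R n"] less_imp_le[OF Rpos[of n]] R_le[of n] by auto
  then obtain s where s: "\<And>n. 0 \<le> s n" "\<And>n. s n \<le> t0" "\<And>n. Wc (s n) = R n" by metis
  have "strict_mono (\<lambda>n. - s n)"
  proof (rule strict_monoI_Suc, rule ccontr)
    fix n assume "\<not> - s n < - s (Suc n)"
    then have "Wc (s n) \<le> Wc (s (Suc n))" using s inI by (intro Wc_mono) auto
    then show False using s(3) R_diff[of n] a(1)[of n] by simp
  qed
  moreover have "0 < s n" for n
    using s(1)[of n] s(3)[of n] Rpos[of n] Wc_0 by (cases "s n = 0") auto
  moreover have "\<exists>n. s n < x" if x: "0 < x" for x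
  proof -
    have "0 < w t0" using w_pos[OF t0] .
    then obtain n where "R n < w t0 * x"
      using order_tendstoD(2)[OF \<open>R \<longlonglongrightarrow> 0\<close>, of "w t0 * x"] x by (auto simp: eventually_sequentially)
    moreover have "w t0 * s n \<le> R n" using Wc_ge_linear[OF t0 s(1,2)] s(3) by simp
    ultimately have "w t0 * s n < w t0 * x" by linarith
    then show ?thesis using \<open>0 < w t0\<close> by (intro exI[of _ n]) simp
  qed
  moreover have "Wmass (s (Suc n)) (s n) = ennreal (a n)" for n
  proof -
    have "s (Suc n) \<le> s n" using strict_monoD[OF \<open>strict_mono (\<lambda>n. - s n)\<close>, of n "Suc n"] by simp
    then show ?thesis using Wmass_eq_Wc_diff[of "s (Suc n)" "s n"] s inI R_diff[of n] by simp
  qed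
  ultimately show ?thesis using that s(2) by blast
qed

end

section \<open>Level functions of functions with decreasing ratio to the weight\<close>

text \<open>The averaging argument on a level interval \<open>(a, b]\<close> split at \<open>x\<close>: the quantities are
  the masses of \<open>h w\<close> and of \<open>w\<close> on \<open>(a, x]\<close> and \<open>(x, b]\<close>, and \<open>hx = h x\<close> for \<open>h\<close> decreasing.\<close>

lemma level_average_eq:
  fixes Ga Gb Wa Wb hx :: real
  assumes "0 < Wa" "0 < Wb" "hx * Wa \<le> Ga" "Gb \<le> hx * Wb"
    and level: "Ga / Wa \<le> (Ga + Gb) / (Wa + Wb)"
  shows "hx = (Ga + Gb) / (Wa + Wb)"
proof (rule antisym)
  have "hx \<le> Ga / Wa" using assms(1,3) by (simp add: le_divide_eq)
  then show "hx \<le> (Ga + Gb) / (Wa + Wb)" using level by linarith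
  show "(Ga + Gb) / (Wa + Wb) \<le> hx"
  proof (rule ccontr)
    assume "\<not> ?thesis"
    then have "hx * Wb < (Ga + Gb) / (Wa + Wb) * Wb"
      using assms(2) by (intro mult_strict_right_mono) auto
    then have "Gb < (Ga + Gb) / (Wa + Wb) * Wb" using assms(4) by linarith
    moreover have "Ga \<le> (Ga + Gb) / (Wa + Wb) * Wa" using level assms(1) by (simp add: divide_le_eq)
    ultimately have "Ga + Gb < (Ga + Gb) / (Wa + Wb) * (Wa + Wb)" by (simp add: distrib_left)
    then show False using assms(1,2) by simp
  qed
qed

text \<open>Functions \<open>f = h w\<close> with \<open>h\<close> decreasing: such an \<open>f\<close> coincides a.e. with its decreasing
  rearrangement and with its level function. Local constancy of \<open>h\<close> from the left makes the
  value at the right end point of a level interval fit as well.\<close>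

locale decreasing_ratio = weighted_interval +
  fixes h :: "real \<Rightarrow> real"
  assumes h_nonneg: "\<And>x. 0 \<le> h x"
    and h_antimono: "\<And>x y. 0 < x \<Longrightarrow> x \<le> y \<Longrightarrow> h y \<le> h x"
    and h_left_const: "\<And>x. 0 < x \<Longrightarrow> \<exists>\<delta>>0. \<forall>y. x - \<delta> < y \<and> y \<le> x \<longrightarrow> h y = h x"
    and h_measurable [measurable]: "h \<in> borel_measurable borel"
    and h_locally_integrable:
      "\<And>t. 0 < t \<Longrightarrow> ereal t \<le> \<gamma> \<Longrightarrow> (\<integral>\<^sup>+x\<in>{0<..t}. ennreal (h x * wI x) \<partial>lborel) < \<infinity>"
begin

definition f :: "real \<Rightarrow> real" where "f x = h x * w x"

lemma f_nonneg: "x \<in> I \<Longrightarrow> 0 \<le> f x"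
  using h_nonneg w_pos by (simp add: f_def less_imp_le)

lemma f_antimono: "0 < x \<Longrightarrow> x \<le> y \<Longrightarrow> y \<in> I \<Longrightarrow> f y \<le> f x"
  using h_antimono[of x y] w_antimono[of x y] Iset_downward_closed[of y \<gamma> x] h_nonneg w_pos[of y]
  by (auto simp: f_def intro!: mult_mono)

lemma f_superlevel_measurable: "{x \<in> I. s < ennreal \<bar>f x\<bar>} \<in> sets lebesgue"
proof -
  have "{x \<in> I. s < ennreal \<bar>f x\<bar>} = {x \<in> space borel. x \<in> I \<and> s < ennreal \<bar>h x * wI x\<bar>}"
    by (auto simp: f_def wI_eq)
  also have "\<dots> \<in> sets borel" using gamma_pos by measurable
  finally show ?thesis by simp
qed

lemma drearr_le:
  assumes "t \<in> I" "0 < t"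
  shows "drearr \<gamma> f t \<le> ennreal (f t)"
  unfolding drearr_def
proof (rule Inf_lower, simp)
  have "{x \<in> I. ennreal (f t) < ennreal \<bar>f x\<bar>} \<subseteq> {0..<t}"
  proof clarify
    fix x assume x: "x \<in> I" "ennreal (f t) < ennreal \<bar>f x\<bar>"
    have "x < t"
    proof (rule ccontr)
      assume "\<not> x < t"
      then have "ennreal \<bar>f x\<bar> \<le> ennreal (f t)"
        using x assms f_antimono[of t x] f_nonneg[of x] by (auto intro: ennreal_leI)
      then show False using x(2) by simp
    qed
    then show "x \<in> {0..<t}" using x by (auto simp: Iset_def)
  qed
  then have "distr_fun \<gamma> f (ennreal (f t)) \<le> emeasure lebesgue {0..<t}"
    unfolding distr_fun_def by (intro emeasure_mono) auto
  then show "distr_fun \<gamma> f (ennreal (f t)) \<le> ennreal t" using assms by simp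
qed

lemma drearr_ge:
  assumes "0 \<le> t" "t < t'" "t' \<in> I"
  shows "ennreal (f t') \<le> drearr \<gamma> f t"
  unfolding drearr_def
proof (rule Inf_greatest, rule ccontr)
  fix s assume "s \<in> {s. distr_fun \<gamma> f s \<le> ennreal t}" and "\<not> ennreal (f t') \<le> s"
  then have s: "emeasure lebesgue {x \<in> I. s < ennreal \<bar>f x\<bar>} \<le> ennreal t" and "s < ennreal (f t')"
    by (simp_all add: distr_fun_def not_le)
  have "{0<..t'} \<subseteq> {x \<in> I. s < ennreal \<bar>f x\<bar>}"
  proof
    fix x assume x: "x \<in> {0<..t'}"
    then have "ennreal (f t') \<le> ennreal \<bar>f x\<bar>" using f_antimono[of x t'] assms by (auto intro: ennreal_leI)
    with \<open>s < ennreal (f t')\<close> have "s < ennreal \<bar>f x\<bar>" by (rule less_le_trans)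
    then show "x \<in> {x \<in> I. s < ennreal \<bar>f x\<bar>}" using Iset_downward_closed[OF assms(3)] x by simp
  qed
  then have "emeasure lebesgue {0<..t'} \<le> emeasure lebesgue {x \<in> I. s < ennreal \<bar>f x\<bar>}"
    using f_superlevel_measurable by (intro emeasure_mono) auto
  then have "ennreal t' \<le> ennreal t" using s assms by (simp add: order_trans[OF _ s])
  then show False using assms by (simp add: ennreal_le_iff)
qed

text \<open>Away from the countably many discontinuities of the monotone \<open>f\<close>, squeezing
  \<open>f t' \<le> f\<^sup>*(t) \<le> f t\<close> for \<open>t' \<down> t\<close> gives \<open>f\<^sup>* = f\<close>.\<close>

lemma drearr_AE_eq: "AE x in lborel. x \<in> I \<longrightarrow> drearr \<gamma> f x = ennreal (f x)"
proof -
  define A where "A = {x. 0 < x \<and> x \<in> I}"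
  have "mono_on A (\<lambda>x. - f x)" by (rule mono_onI) (auto simp: A_def intro: f_antimono)
  then have "countable {a\<in>A. \<not> continuous (at a within A) (\<lambda>x. - f x)}" (is "countable ?D")
    by (rule mono_on_ctble_discont)
  then have N: "insert 0 ?D \<in> null_sets lborel" by (intro countable_imp_null_set_lborel) auto
  show ?thesis
  proof (rule AE_I'[OF N], rule subsetI, rule ccontr)
    fix x assume "x \<in> {x \<in> space lborel. \<not> (x \<in> I \<longrightarrow> drearr \<gamma> f x = ennreal (f x))}"
      and nin: "x \<notin> insert 0 ?D"
    then have xI: "x \<in> I" and ne: "drearr \<gamma> f x \<noteq> ennreal (f x)" and xA: "x \<in> A"
      by (auto simp: A_def Iset_def)
    have cont: "continuous (at x within A) (\<lambda>x. - f x)" using nin xA by auto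
    have "drearr \<gamma> f x < ennreal (f x)" using drearr_le xA ne by (auto simp: A_def order_less_le)
    then obtain d where d: "drearr \<gamma> f x = ennreal d" "0 \<le> d" "d < f x"
      by (cases "drearr \<gamma> f x" rule: ennreal_cases) (auto simp: ennreal_less_iff)
    then obtain \<delta> where \<delta>: "0 < \<delta>" "\<And>y. y \<in> A \<Longrightarrow> dist y x < \<delta> \<Longrightarrow> dist (- f y) (- f x) < f x - d"
      using cont unfolding continuous_within_eps_delta by (metis diff_gt_0_iff_gt)
    obtain y where y: "x < y" "y < x + \<delta>" "y \<in> I"
      using Iset_right_neighbour[OF gamma_pos xI \<delta>(1)] by blast
    then have "d < f y" using \<delta>(2)[of y] xA by (auto simp: A_def dist_real_def)
    moreover have "ennreal (f y) \<le> drearr \<gamma> f x" using drearr_ge[of x y] xA y by (auto simp: A_def)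
    ultimately show False using d by (simp add: ennreal_le_iff)
  qed
qed

definition Gmass :: "real \<Rightarrow> real \<Rightarrow> ennreal" where
  "Gmass s t = (\<integral>\<^sup>+x\<in>{s<..t}. ennreal (h x * wI x) \<partial>lborel)"

lemma Gint_drearr_eq:
  assumes "0 \<le> s" "ereal t \<le> \<gamma>"
  shows "Gint (drearr \<gamma> f) s t = Gmass s t"
  unfolding Gint_def Gmass_def nn_integral_completion
  using drearr_AE_eq AE_ereal_neq[of \<gamma>]
proof (intro nn_integral_cong_AE, eventually_elim)
  case (elim x)
  show ?case
  proof (cases "x \<in> {s<..t}")
    case True
    then have "x \<in> I"
      using assms elim in_Iset_if_below[of x t] by (cases "x = t") (auto simp: Iset_def)
    then show ?thesis using elim True by (simp add: f_def wI_eq)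
  qed simp
qed

lemma Wint_eq:
  assumes "0 \<le> s" "ereal t \<le> \<gamma>"
  shows "Wint w s t = Wmass s t"
  unfolding Wint_def Wmass_def nn_integral_completion
  using AE_ereal_neq[of \<gamma>]
proof (intro nn_integral_cong_AE, eventually_elim)
  case (elim x)
  show ?case
  proof (cases "x \<in> {s<..t}")
    case True
    then have "x \<in> I"
      using assms elim in_Iset_if_below[of x t] by (cases "x = t") (auto simp: Iset_def)
    then show ?thesis using True by (simp add: wI_eq)
  qed simp
qed

lemma Gmass_finite:
  assumes "0 \<le> s" "s < t" "ereal t \<le> \<gamma>"
  shows "Gmass s t < \<infinity>"
proof -
  have "Gmass s t \<le> Gmass 0 t"
    unfolding Gmass_def using assms(1) by (intro nn_integral_mono) (auto split: split_indicator)
  then show ?thesis using h_locally_integrable[of t] assms by (simp add: Gmass_def)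
qed

lemma Gmass_split: "s \<le> x \<Longrightarrow> x \<le> t \<Longrightarrow> Gmass s t = Gmass s x + Gmass x t"
proof -
  assume "s \<le> x" "x \<le> t"
  then have "{s<..t} = {s<..x} \<union> {x<..t}" by auto
  then show ?thesis unfolding Gmass_def by (simp add: nn_integral_disjoint_pair)
qed

lemma Gmass_ge:
  assumes "0 \<le> s" "s < x"
  shows "ennreal (h x) * Wmass s x \<le> Gmass s x"
proof -
  have "ennreal (h x) * Wmass s x = (\<integral>\<^sup>+y. ennreal (h x) * (ennreal (wI y) * indicator {s<..x} y) \<partial>lborel)"
    unfolding Wmass_def by (rule nn_integral_cmult[symmetric]) auto
  also have "\<dots> \<le> Gmass s x"
    unfolding Gmass_def using assms h_antimono[of _ x] h_nonneg wI_nonneg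
    by (intro nn_integral_mono)
      (auto simp: ennreal_mult[symmetric] split: split_indicator intro!: ennreal_leI mult_right_mono)
  finally show ?thesis .
qed

lemma Gmass_le:
  assumes "0 < x"
  shows "Gmass x t \<le> ennreal (h x) * Wmass x t"
proof -
  have "Gmass x t \<le> (\<integral>\<^sup>+y. ennreal (h x) * (ennreal (wI y) * indicator {x<..t} y) \<partial>lborel)"
    unfolding Gmass_def using assms h_antimono[of x] h_nonneg wI_nonneg
    by (intro nn_integral_mono)
      (auto simp: ennreal_mult[symmetric] split: split_indicator intro!: ennreal_leI mult_right_mono)
  also have "\<dots> = ennreal (h x) * Wmass x t"
    unfolding Wmass_def by (rule nn_integral_cmult) auto
  finally show ?thesis .
qed

lemma level_int_interior:
  assumes level: "level_int \<gamma> w (drearr \<gamma> f) a b" and x: "a < x" "x < b"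
  shows "ennreal (h x) = Gint (drearr \<gamma> f) a b / Wint w a b"
proof -
  have a: "0 \<le> a" and b: "ereal b \<le> \<gamma>" using level by (auto simp: level_int_def)
  have xg: "ereal x \<le> \<gamma>" using x b by (metis ereal_less_eq(3) less_imp_le order_trans)
  define Ga Gb Wa Wb where "Ga = enn2real (Gmass a x)" "Gb = enn2real (Gmass x b)"
    "Wa = enn2real (Wmass a x)" "Wb = enn2real (Wmass x b)"
  have G: "Gmass a x = ennreal Ga" "Gmass x b = ennreal Gb"
    using Gmass_finite[of a x] Gmass_finite[of x b] a x b xg by (simp_all add: Ga_Gb_Wa_Wb_def)
  have W: "Wmass a x = ennreal Wa" "Wmass x b = ennreal Wb"
    using Wmass_finite[of a x] Wmass_finite[of x b] a x b xg by (simp_all add: Ga_Gb_Wa_Wb_def)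
  have Wpos: "0 < Wa" "0 < Wb"
    using Wmass_pos[of a x] Wmass_pos[of x b] a x b xg W by auto
  have nonneg: "0 \<le> Ga" "0 \<le> Gb" by (simp_all add: Ga_Gb_Wa_Wb_def)
  have ratio: "Gint (drearr \<gamma> f) a a' / Wint w a a' = ennreal (G' / W')"
    if "Gmass a a' = ennreal G'" "Wmass a a' = ennreal W'" "0 \<le> G'" "0 < W'" "ereal a' \<le> \<gamma>" for a' G' W'
    using that Gint_drearr_eq[OF a] Wint_eq[OF a] divide_ennreal by simp
  have ab: "Gmass a b = ennreal (Ga + Gb)" "Wmass a b = ennreal (Wa + Wb)"
    using Gmass_split[of a x b] Wmass_split[of a x b] G W x nonneg Wpos by auto
  have ratio_ab: "Gint (drearr \<gamma> f) a b / Wint w a b = ennreal ((Ga + Gb) / (Wa + Wb))"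
    using ratio[OF ab] nonneg Wpos b by simp
  have "Gint (drearr \<gamma> f) a x / Wint w a x \<le> Gint (drearr \<gamma> f) a b / Wint w a b"
    using level x unfolding level_int_def by auto
  then have "ennreal (Ga / Wa) \<le> ennreal ((Ga + Gb) / (Wa + Wb))"
    using ratio[OF G(1) W(1) nonneg(1) Wpos(1) xg] ratio_ab by simp
  then have "Ga / Wa \<le> (Ga + Gb) / (Wa + Wb)" using nonneg Wpos by (simp add: ennreal_le_iff)
  moreover have "h x * Wa \<le> Ga"
    using Gmass_ge[OF a x(1)] G W h_nonneg[of x] nonneg Wpos by (simp add: ennreal_mult[symmetric])
  moreover have "Gb \<le> h x * Wb"
    using Gmass_le[of x b] G W h_nonneg[of x] Wpos a x by (simp add: ennreal_mult[symmetric])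
  ultimately have "h x = (Ga + Gb) / (Wa + Wb)" by (rule level_average_eq[OF Wpos, rotated -1])
  then show ?thesis using ratio_ab by simp
qed

lemma level_int_const:
  assumes level: "level_int \<gamma> w (drearr \<gamma> f) a b" and x: "a < x" "x \<le> b"
  shows "ennreal (h x) = Gint (drearr \<gamma> f) a b / Wint w a b"
proof (cases "x = b")
  case True
  have "0 < b" using level by (auto simp: level_int_def)
  then obtain \<delta> where "0 < \<delta>" and \<delta>: "\<And>y. b - \<delta> < y \<Longrightarrow> y \<le> b \<Longrightarrow> h y = h b"
    using h_left_const by blast
  define y where "y = (max a (b - \<delta>) + b) / 2"
  have "a < y" "y < b" "b - \<delta> < y" using x True \<open>0 < \<delta>\<close> by (auto simp: y_def max_def)
  then show ?thesis using level_int_interior[OF level, of y] \<delta>[of y] True by simp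
qed (use level_int_interior[OF level] x in simp)

lemma level_fun_AE_eq: "AE x in lborel. x \<in> I \<longrightarrow> level_fun \<gamma> w (drearr \<gamma> f) x = ennreal (h x * w x)"
  using drearr_AE_eq
proof eventually_elim
  case (elim x)
  show ?case
  proof
    assume "x \<in> I"
    show "level_fun \<gamma> w (drearr \<gamma> f) x = ennreal (h x * w x)"
    proof (cases "\<exists>a b. max_level_int \<gamma> w (drearr \<gamma> f) a b \<and> a < x \<and> x \<le> b")
      case True
      let ?P = "\<lambda>p. max_level_int \<gamma> w (drearr \<gamma> f) (fst p) (snd p) \<and> fst p < x \<and> x \<le> snd p"
      obtain a b where ab: "(SOME p. ?P p) = (a, b)" by fastforce
      have "?P (a, b)" using someI_ex[of ?P] True ab by auto
      then have "level_int \<gamma> w (drearr \<gamma> f) a b" "a < x" "x \<le> b"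
        by (simp_all add: max_level_int_def)
      then have "ennreal (h x) = Gint (drearr \<gamma> f) a b / Wint w a b" by (rule level_int_const)
      then show ?thesis
        unfolding level_fun_def using True ab h_nonneg[of x] w_pos[OF \<open>x \<in> I\<close>]
        by (simp add: ennreal_mult)
    next
      case False
      then have "level_fun \<gamma> w (drearr \<gamma> f) x = drearr \<gamma> f x"
        unfolding level_fun_def by (rule if_not_P)
      then show ?thesis using elim \<open>x \<in> I\<close> by (simp add: f_def)
    qed
  qed
qed

lemma Qfun_eq_integral:
  assumes \<phi>: "orlicz_fun \<phi>"
  shows "Qfun \<gamma> \<phi> w f = (\<integral>\<^sup>+x\<in>I. ennreal (\<phi> (h x) * w x) \<partial>lborel)"
  unfolding Qfun_def nn_integral_completion
  using level_fun_AE_eq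
proof (intro nn_integral_cong_AE, eventually_elim)
  case (elim x)
  show ?case
  proof (cases "x \<in> I")
    case True
    have "ennreal (h x * w x) / ennreal (w x) = ennreal (h x)"
      using divide_ennreal[of "h x * w x" "w x"] w_pos[OF True] h_nonneg[of x] by simp
    then show ?thesis
      using elim True orlicz_fun_nonneg[OF \<phi> h_nonneg[of x]] w_pos[OF True] h_nonneg[of x]
      by (simp add: phi_ext_def ennreal_mult)
  qed simp
qed

end

section \<open>Step profiles and function spaces\<close>

definition decreasing_profile :: "(real \<Rightarrow> real) \<Rightarrow> bool" where
  "decreasing_profile h \<longleftrightarrow> (\<forall>x. 0 \<le> h x) \<and> (\<forall>x y. 0 < x \<longrightarrow> x \<le> y \<longrightarrow> h y \<le> h x)
     \<and> (\<forall>x\<le>0. h x = 0) \<and> (\<forall>x>0. \<exists>\<delta>>0. \<forall>y. x - \<delta> < y \<and> y \<le> x \<longrightarrow> h y = h x)"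

lemma decreasing_profile_scale:
  "decreasing_profile h \<Longrightarrow> 0 < r \<Longrightarrow> decreasing_profile (\<lambda>x. r * h x)"
  unfolding decreasing_profile_def by (simp add: mult_left_mono)

lemma antimono_on_pos_measurable:
  fixes g :: "real \<Rightarrow> real"
  assumes "\<And>x y. 0 < x \<Longrightarrow> x \<le> y \<Longrightarrow> g y \<le> g x" "\<And>x. x \<le> 0 \<Longrightarrow> g x = g 0"
  shows "g \<in> borel_measurable borel"
proof -
  have "(\<lambda>x. - g x) \<in> borel_measurable borel"
  proof (rule borel_measurable_piecewise_mono[where C="{{..0}, {0<..}}"])
    show "mono_on C (\<lambda>x. - g x)" if C: "C \<in> {{..0::real}, {0<..}}" for C
    proof (rule mono_onI)
      fix x y assume "x \<in> C" "y \<in> C" "x \<le> y"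
      then show "- g x \<le> - g y"
        using C assms(1)[of x y] assms(2)[of x] assms(2)[of y] by auto
    qed
  qed auto
  then show ?thesis using borel_measurable_uminus_eq by blast
qed

lemma decreasing_profile_comp_measurable:
  fixes g :: "real \<Rightarrow> real"
  assumes "decreasing_profile h" "\<And>x y. 0 \<le> x \<Longrightarrow> x \<le> y \<Longrightarrow> g x \<le> g y"
  shows "(\<lambda>x. g (h x)) \<in> borel_measurable borel"
proof (rule antimono_on_pos_measurable)
  show "g (h y) \<le> g (h x)" if "0 < x" "x \<le> y" for x y
    using assms that unfolding decreasing_profile_def by blast
  show "g (h x) = g (h 0)" if "x \<le> 0" for x
    using assms that unfolding decreasing_profile_def by simp
qed

lemma decreasing_profile_measurable:
  "decreasing_profile h \<Longrightarrow> h \<in> borel_measurable borel"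
  using decreasing_profile_comp_measurable[of h "\<lambda>x. x"] by simp

lemma disjoint_family_Ioc_incseq:
  fixes s :: "nat \<Rightarrow> real"
  assumes "incseq s"
  shows "disjoint_family (\<lambda>n. {s n<..s (Suc n)})"
proof (unfold disjoint_family_on_def, intro ballI impI)
  have "{s m<..s (Suc m)} \<inter> {s n<..s (Suc n)} = {}" if "m < n" for m n
    using monoD[OF assms, of "Suc m" n] that by auto
  then show "{s m<..s (Suc m)} \<inter> {s n<..s (Suc n)} = {}" if "m \<noteq> n" for m n
    using that by (metis inf_commute linorder_neqE_nat)
qed

lemma disjoint_family_Ioc_decseq:
  fixes s :: "nat \<Rightarrow> real"
  assumes "decseq s"
  shows "disjoint_family (\<lambda>n. {s (Suc n)<..s n})"
proof (unfold disjoint_family_on_def, intro ballI impI)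
  have "{s (Suc m)<..s m} \<inter> {s (Suc n)<..s n} = {}" if "m < n" for m n
    using antimonoD[OF assms, of "Suc m" n] that by auto
  then show "{s (Suc m)<..s m} \<inter> {s (Suc n)<..s n} = {}" if "m \<noteq> n" for m n
    using that by (metis inf_commute linorder_neqE_nat)
qed

lemma step_profile_increasing:
  fixes s v :: "nat \<Rightarrow> real"
  assumes s: "strict_mono s" "s 0 = 0" "\<And>x. 0 < x \<Longrightarrow> \<exists>n. x \<le> s n"
    and v: "decseq v" "\<And>n. 0 \<le> v n"
  obtains h where "decreasing_profile h" "\<And>n x. x \<in> {s n<..s (Suc n)} \<Longrightarrow> h x = v n"
    "\<And>x. (\<forall>n. x \<notin> {s n<..s (Suc n)}) \<Longrightarrow> h x = 0"
proof
  define idx where "idx x = (THE n. s n < x \<and> x \<le> s (Suc n))" for x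
  have index: "\<exists>!n. s n < x \<and> x \<le> s (Suc n)" if x: "0 < x" for x
  proof -
    obtain m where "x \<le> s m" using s(3)[OF x] by blast
    then show ?thesis using strict_mono_Ioc_index[OF s(1), of x m] s(2) x by simp
  qed
  have idx: "s (idx x) < x \<and> x \<le> s (Suc (idx x))" if "0 < x" for x
    unfolding idx_def using index[OF that] by (rule theI')
  have idx_eq: "idx x = n" if "x \<in> {s n<..s (Suc n)}" for x n
    unfolding idx_def using index that s(2) strict_mono_less_eq[OF s(1), of 0 n]
    by (intro the1_equality) auto
  define h where "h x = (if x \<le> 0 then 0 else v (idx x))" for x
  show block: "h x = v n" if "x \<in> {s n<..s (Suc n)}" for n x
    using that idx_eq[OF that] s(2) strict_mono_less_eq[OF s(1), of 0 n] by (simp add: h_def)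
  show "h x = 0" if "\<forall>n. x \<notin> {s n<..s (Suc n)}" for x
    using that idx[of x] by (auto simp: h_def)
  show "decreasing_profile h"
    unfolding decreasing_profile_def
  proof (intro conjI allI impI)
    show "0 \<le> h x" for x using v(2) by (simp add: h_def)
    show "h x = 0" if "x \<le> 0" for x using that by (simp add: h_def)
    fix x :: real assume "0 < x"
    show "h y \<le> h x" if "x \<le> y" for y
    proof -
      have "s (idx x) < s (Suc (idx y))" using idx[of x] idx[of y] \<open>0 < x\<close> that by fastforce
      then have "idx x \<le> idx y" using strict_mono_less[OF s(1)] by simp
      then show ?thesis using v(1) \<open>0 < x\<close> that by (simp add: h_def decseq_def)
    qed
    show "\<exists>\<delta>>0. \<forall>y. x - \<delta> < y \<and> y \<le> x \<longrightarrow> h y = h x"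
      using idx[OF \<open>0 < x\<close>] block[of x "idx x"] block[of _ "idx x"]
      by (intro exI[of _ "x - s (idx x)"]) auto
  qed
qed

lemma step_profile_decreasing:
  fixes s v :: "nat \<Rightarrow> real"
  assumes s: "strict_mono (\<lambda>n. - s n)" "\<And>n. 0 < s n" "\<And>x. 0 < x \<Longrightarrow> \<exists>n. s n < x"
    and v: "incseq v" "\<And>n. 0 \<le> v n"
  obtains h where "decreasing_profile h" "\<And>n x. x \<in> {s (Suc n)<..s n} \<Longrightarrow> h x = v n"
    "\<And>x. (\<forall>n. x \<notin> {s (Suc n)<..s n}) \<Longrightarrow> h x = 0"
proof
  have s_le: "s n \<le> s m" if "m \<le> n" for m n using strict_mono_less_eq[OF s(1)] that by simp
  define idx where "idx x = (THE n. s (Suc n) < x \<and> x \<le> s n)" for x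
  have index: "\<exists>!n. s (Suc n) < x \<and> x \<le> s n" if x: "0 < x" "x \<le> s 0" for x
  proof -
    obtain m where "s m < x" using s(3)[OF x(1)] by blast
    then have "\<exists>!n. - s n \<le> - x \<and> - x < - s (Suc n)"
      using strict_mono_Ico_index[OF s(1), of "- x" m] x(2) by simp
    then show ?thesis by (simp add: conj_commute)
  qed
  have idx: "s (Suc (idx x)) < x \<and> x \<le> s (idx x)" if "0 < x" "x \<le> s 0" for x
    unfolding idx_def using index[OF that] by (rule theI')
  have idx_eq: "idx x = n" if "x \<in> {s (Suc n)<..s n}" for x n
    unfolding idx_def using index that s(2)[of "Suc n"] s_le[of 0 n]
    by (intro the1_equality) auto
  define h where "h x = (if 0 < x \<and> x \<le> s 0 then v (idx x) else 0)" for x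
  show block: "h x = v n" if "x \<in> {s (Suc n)<..s n}" for n x
    using that idx_eq[OF that] s(2)[of "Suc n"] s_le[of 0 n] by (simp add: h_def)
  show "h x = 0" if "\<forall>n. x \<notin> {s (Suc n)<..s n}" for x
    using that idx[of x] by (auto simp: h_def)
  show "decreasing_profile h"
    unfolding decreasing_profile_def
  proof (intro conjI allI impI)
    show "0 \<le> h x" for x using v(2) by (simp add: h_def)
    show "h x = 0" if "x \<le> 0" for x using that by (simp add: h_def)
    fix x :: real assume "0 < x"
    show "h y \<le> h x" if "x \<le> y" for y
    proof (cases "y \<le> s 0")
      case True
      then have "s (Suc (idx x)) < s (idx y)" using idx[of x] idx[of y] \<open>0 < x\<close> that by fastforce
      then have "idx y \<le> idx x" using strict_mono_less[OF s(1)] by simp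
      then show ?thesis using v(1) \<open>0 < x\<close> that True by (simp add: h_def incseq_def)
    qed (use v(2) in \<open>simp add: h_def\<close>)
    show "\<exists>\<delta>>0. \<forall>y. x - \<delta> < y \<and> y \<le> x \<longrightarrow> h y = h x"
    proof (cases "x \<le> s 0")
      case True
      then show ?thesis
        using idx[OF \<open>0 < x\<close> True] block[of x "idx x"] block[of _ "idx x"]
        by (intro exI[of _ "x - s (Suc (idx x))"]) auto
    qed (auto simp: h_def intro!: exI[of _ "x - s 0"])
  qed
qed

context weighted_interval
begin

definition wmodular :: "(real \<Rightarrow> real) \<Rightarrow> (real \<Rightarrow> real) \<Rightarrow> ennreal" where
  "wmodular \<phi> h = (\<integral>\<^sup>+x\<in>I. ennreal (\<phi> (h x) * w x) \<partial>lborel)"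

lemma wmodular_step_fun:
  assumes \<phi>: "orlicz_fun \<phi>" and disj: "disjoint_family (\<lambda>n. {p n<..q n})"
    and p: "\<And>n. 0 \<le> p n" and q: "\<And>n. q n \<in> I"
    and block: "\<And>n x. x \<in> {p n<..q n} \<Longrightarrow> h x = v n" and v: "\<And>n. 0 \<le> v n"
    and outside: "\<And>x. x \<in> I \<Longrightarrow> (\<forall>n. x \<notin> {p n<..q n}) \<Longrightarrow> h x = 0"
  shows "wmodular \<phi> h = (\<Sum>n. ennreal (\<phi> (v n)) * Wmass (p n) (q n))"
proof -
  have pointwise: "ennreal (\<phi> (h x) * w x) * indicator I x
      = (\<Sum>n. ennreal (\<phi> (v n)) * (ennreal (wI x) * indicator {p n<..q n} x))" for x
  proof (cases "\<exists>n. x \<in> {p n<..q n}")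
    case True
    then obtain n where n: "x \<in> {p n<..q n}" by blast
    have xI: "x \<in> I" using n p[of n] Iset_downward_closed[OF q[of n]] by auto
    have "(\<Sum>m. ennreal (\<phi> (v m)) * (ennreal (wI x) * indicator {p m<..q m} x))
        = (\<Sum>m\<in>{n}. ennreal (\<phi> (v m)) * (ennreal (wI x) * indicator {p m<..q m} x))"
    proof (rule suminf_finite)
      fix m assume "m \<notin> {n}"
      then have "x \<notin> {p m<..q m}" using disj n unfolding disjoint_family_on_def by blast
      then show "ennreal (\<phi> (v m)) * (ennreal (wI x) * indicator {p m<..q m} x) = 0" by simp
    qed simp
    then show ?thesis
      using n xI block[OF n] orlicz_fun_nonneg[OF \<phi> v[of n]] w_pos[OF xI]
      by (simp add: wI_eq ennreal_mult)
  next
    case False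
    then show ?thesis
      using outside \<phi> by (cases "x \<in> I") (auto simp: orlicz_fun_def)
  qed
  have "wmodular \<phi> h
      = (\<integral>\<^sup>+x. (\<Sum>n. ennreal (\<phi> (v n)) * (ennreal (wI x) * indicator {p n<..q n} x)) \<partial>lborel)"
    unfolding wmodular_def using pointwise by simp
  also have "\<dots> = (\<Sum>n. ennreal (\<phi> (v n)) * Wmass (p n) (q n))"
    unfolding Wmass_def by (subst nn_integral_suminf) (auto simp: nn_integral_cmult)
  finally show ?thesis .
qed

lemma decreasing_profile_locally_integrable:
  assumes \<phi>: "orlicz_fun \<phi>" and h: "decreasing_profile h" and fin: "wmodular \<phi> h < \<infinity>"
    and t: "0 < t" "ereal t \<le> \<gamma>"
  shows "(\<integral>\<^sup>+x\<in>{0<..t}. ennreal (h x * wI x) \<partial>lborel) < \<infinity>"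
proof -
  have p1: "0 < \<phi> 1" using orlicz_fun_pos[OF \<phi>] by simp
  have hnn: "0 \<le> h x" for x using h by (simp add: decreasing_profile_def)
  have [measurable]: "(\<lambda>x. \<phi> (h x)) \<in> borel_measurable borel"
    using h orlicz_fun_mono[OF \<phi>] by (rule decreasing_profile_comp_measurable)
  have pointwise: "h x * wI x \<le> wI x + 1 / \<phi> 1 * (\<phi> (h x) * wI x)" for x
    using mult_right_mono[OF orlicz_fun_le_linear[OF \<phi> hnn[of x]] wI_nonneg[of x]]
    by (simp add: algebra_simps)
  have "(\<integral>\<^sup>+x\<in>{0<..t}. ennreal (h x * wI x) \<partial>lborel)
      \<le> (\<integral>\<^sup>+x. ennreal (wI x) * indicator {0<..t} x + ennreal (1 / \<phi> 1) * ennreal (\<phi> (h x) * wI x) \<partial>lborel)"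
  proof (intro nn_integral_mono)
    fix x
    have nonneg: "0 \<le> 1 / \<phi> 1" "0 \<le> \<phi> (h x) * wI x"
      using p1 wI_nonneg[of x] orlicz_fun_nonneg[OF \<phi> hnn[of x]] by simp_all
    have "ennreal (h x * wI x) \<le> ennreal (wI x + 1 / \<phi> 1 * (\<phi> (h x) * wI x))"
      by (rule ennreal_leI[OF pointwise])
    also have "\<dots> = ennreal (wI x) + ennreal (1 / \<phi> 1) * ennreal (\<phi> (h x) * wI x)"
      using nonneg wI_nonneg[of x] ennreal_mult[OF nonneg] by (simp add: ennreal_plus)
    finally have "ennreal (h x * wI x) \<le> ennreal (wI x) + ennreal (1 / \<phi> 1) * ennreal (\<phi> (h x) * wI x)" .
    then show "ennreal (h x * wI x) * indicator {0<..t} x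
        \<le> ennreal (wI x) * indicator {0<..t} x + ennreal (1 / \<phi> 1) * ennreal (\<phi> (h x) * wI x)"
      by (auto split: split_indicator)
  qed
  also have "\<dots> = Wmass 0 t + ennreal (1 / \<phi> 1) * (\<integral>\<^sup>+x. ennreal (\<phi> (h x) * wI x) \<partial>lborel)"
    unfolding Wmass_def by (simp add: nn_integral_add nn_integral_cmult)
  also have "\<dots> \<le> Wmass 0 t + ennreal (1 / \<phi> 1) * wmodular \<phi> h"
    unfolding wmodular_def
    by (intro add_left_mono mult_left_mono nn_integral_mono) (auto simp: wI_def split: split_indicator)
  also have "\<dots> < \<infinity>" using Wmass_finite[OF _ t(2)] fin by (simp add: ennreal_mult_less_top)
  finally show ?thesis .
qed

lemma decreasing_ratio_scaled:
  assumes \<phi>: "orlicz_fun \<phi>" and h: "decreasing_profile h" and fin: "wmodular \<phi> h < \<infinity>"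
    and "0 < r"
  shows "decreasing_ratio \<gamma> w (\<lambda>x. r * h x)"
proof unfold_locales
  have hr: "decreasing_profile (\<lambda>x. r * h x)" using decreasing_profile_scale[OF h \<open>0 < r\<close>] .
  then show "0 \<le> r * h x" for x unfolding decreasing_profile_def by blast
  show "r * h y \<le> r * h x" if "0 < x" "x \<le> y" for x y
    using hr that unfolding decreasing_profile_def by blast
  show "\<exists>\<delta>>0. \<forall>y. x - \<delta> < y \<and> y \<le> x \<longrightarrow> r * h y = r * h x" if "0 < x" for x
    using hr that unfolding decreasing_profile_def by blast
  show "(\<lambda>x. r * h x) \<in> borel_measurable borel" using hr by (rule decreasing_profile_measurable)
  fix t assume t: "0 < t" "ereal t \<le> \<gamma>"
  have [measurable]: "h \<in> borel_measurable borel" using h by (rule decreasing_profile_measurable)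
  have "(\<integral>\<^sup>+x\<in>{0<..t}. ennreal (r * h x * wI x) \<partial>lborel)
      = ennreal r * (\<integral>\<^sup>+x\<in>{0<..t}. ennreal (h x * wI x) \<partial>lborel)"
    using \<open>0 < r\<close> h wI_nonneg
    by (subst nn_integral_cmult[symmetric]) (auto simp: ennreal_mult mult.assoc decreasing_profile_def)
  also have "\<dots> < \<infinity>"
    using decreasing_profile_locally_integrable[OF \<phi> h fin t] by (simp add: ennreal_mult_less_top)
  finally show "(\<integral>\<^sup>+x\<in>{0<..t}. ennreal (r * h x * wI x) \<partial>lborel) < \<infinity>" .
qed

lemma Mspace_counterexample:
  assumes \<phi>: "orlicz_fun \<phi>" and h: "decreasing_profile h" and small: "wmodular \<phi> h \<le> 1"
    and big: "\<And>r. 1 < r \<Longrightarrow> wmodular \<phi> (\<lambda>x. r * h x) = \<infinity>"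
  shows "\<exists>f\<in>Mspace \<gamma> \<phi> w. Qfun \<gamma> \<phi> w f \<le> 1 \<and> (\<forall>r>(1::real). Qfun \<gamma> \<phi> w (\<lambda>x. r * f x) = top)"
proof -
  have fin: "wmodular \<phi> h < \<infinity>" using small by (simp add: le_less_trans)
  have Q: "Qfun \<gamma> \<phi> w (\<lambda>x. r * (h x * w x)) = wmodular \<phi> (\<lambda>x. r * h x)" if "0 < r" for r
  proof -
    interpret decreasing_ratio \<gamma> w "\<lambda>x. r * h x"
      using decreasing_ratio_scaled[OF \<phi> h fin that] .
    show ?thesis using Qfun_eq_integral[OF \<phi>] by (simp add: f_def[abs_def] wmodular_def mult.assoc)
  qed
  define f where "f x = h x * w x" for x
  have Qf: "Qfun \<gamma> \<phi> w f \<le> 1" using Q[of 1] small by (simp add: f_def[abs_def])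
  have [measurable]: "h \<in> borel_measurable borel" using h by (rule decreasing_profile_measurable)
  have "(\<lambda>x. indicator I x *\<^sub>R f x) \<in> borel_measurable lebesgue"
    by (rule measurable_completion) (simp add: f_def wI_def[symmetric] mult.left_commute)
  then have "f \<in> borel_measurable (restrict_space lebesgue I)"
    using gamma_pos by (subst borel_measurable_restrict_space_iff) auto
  moreover have "Qfun \<gamma> \<phi> w (\<lambda>x. 1 * f x) < top" using Qf by (simp add: le_less_trans)
  ultimately have "f \<in> Mspace \<gamma> \<phi> w" unfolding Mspace_def by (auto intro!: exI[of _ "1::real"])
  moreover have "Qfun \<gamma> \<phi> w (\<lambda>x. r * f x) = top" if "1 < r" for r
    using Q[of r] big[OF that] that by (simp add: f_def)
  ultimately show ?thesis using Qf by blast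
qed

lemma bad_profile_not_Delta2_zero:
  assumes \<phi>: "orlicz_fun \<phi>" and nD: "\<not> Delta2_zero \<phi>" and \<gamma>: "\<gamma> = \<infinity>"
  obtains h where "decreasing_profile h" "wmodular \<phi> h \<le> 1"
    "\<And>r. 1 < r \<Longrightarrow> wmodular \<phi> (\<lambda>x. r * h x) = \<infinity>"
proof -
  define \<rho> where "\<rho> n = 1 + inverse (real (Suc n))" for n
  have \<rho>: "\<And>n. 1 < \<rho> n" "\<rho> \<longlonglongrightarrow> 1"
    using LIMSEQ_inverse_real_of_nat_add[of 1] by (simp_all add: \<rho>_def[abs_def])
  obtain v where "decseq v" and vpos: "\<And>n. 0 < v n"
    and jump: "\<And>n. 2 ^ (n + 2) * \<phi> (v n) < \<phi> (\<rho> n * v n)" and "\<And>n. \<phi> (\<rho> n * v n) \<le> 1"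
    using not_Delta2_zero_jump_seq[where \<rho>=\<rho> and B=1 and K="\<lambda>n. 2 ^ (n + 2)", OF \<phi> nD \<rho>(1)] by auto
  have vnn: "\<And>n. 0 \<le> v n" using vpos less_imp_le by blast
  define a where "a n = (1/2) ^ (n + 2) / \<phi> (v n)" for n
  have a_ge_1: "1 \<le> a n" for n
  proof -
    have "2 ^ (n + 2) * \<phi> (v n) \<le> 1" using jump[of n] \<open>\<phi> (\<rho> n * v n) \<le> 1\<close> by simp
    then show ?thesis using orlicz_fun_pos[OF \<phi> vpos[of n]] by (simp add: a_def field_simps power_divide)
  qed
  obtain s where s: "strict_mono s" "s 0 = 0" "\<And>x. 0 < x \<Longrightarrow> \<exists>n. x \<le> s n"
    and mass: "\<And>n. Wmass (s n) (s (Suc n)) = ennreal (a n)"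
    using Wmass_partition_unbounded[where a=a, OF \<gamma> a_ge_1] by blast
  obtain h where h: "decreasing_profile h" "\<And>n x. x \<in> {s n<..s (Suc n)} \<Longrightarrow> h x = v n"
    "\<And>x. (\<forall>n. x \<notin> {s n<..s (Suc n)}) \<Longrightarrow> h x = 0"
    using step_profile_increasing[OF s \<open>decseq v\<close> vnn] by metis
  have modular: "wmodular \<phi> (\<lambda>x. r * h x) = (\<Sum>n. ennreal (\<phi> (r * v n) * a n))" if "0 \<le> r" for r
  proof -
    have "wmodular \<phi> (\<lambda>x. r * h x) = (\<Sum>n. ennreal (\<phi> (r * v n)) * Wmass (s n) (s (Suc n)))"
      using h(2,3) strict_mono_less_eq[OF s(1), of 0] s(2) \<gamma> vnn that
      by (intro wmodular_step_fun[OF \<phi> disjoint_family_Ioc_incseq])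
        (auto simp: strict_mono_mono[OF s(1)] Iset_def)
    moreover have "ennreal (\<phi> (r * v n)) * Wmass (s n) (s (Suc n)) = ennreal (\<phi> (r * v n) * a n)" for n
      using mass[of n] orlicz_fun_nonneg[OF \<phi>, of "r * v n"] vnn[of n] a_ge_1[of n] that
      by (simp add: ennreal_mult)
    ultimately show ?thesis by simp
  qed
  show ?thesis
  proof (rule that[OF h(1)])
    show "wmodular \<phi> h \<le> 1"
      using modular[of 1] orlicz_jump_series(1)[OF \<phi> \<rho>(2) vpos jump a_def] by simp
    show "wmodular \<phi> (\<lambda>x. r * h x) = \<infinity>" if "1 < r" for r
      using modular[of r] orlicz_jump_series(2)[OF \<phi> \<rho>(2) vpos jump a_def that] that by simp
  qed
qed

lemma bad_profile_not_Delta2_infty: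
  assumes \<phi>: "orlicz_fun \<phi>" and nD: "\<not> Delta2_infty \<phi>"
  obtains h where "decreasing_profile h" "wmodular \<phi> h \<le> 1"
    "\<And>r. 1 < r \<Longrightarrow> wmodular \<phi> (\<lambda>x. r * h x) = \<infinity>"
proof -
  obtain t0 where "0 < t0" "t0 \<in> I"
    using Iset_right_neighbour[OF gamma_pos zero_in_Iset[OF gamma_pos], of 1] by auto
  define T where "T = Wc t0"
  have "0 < T" using Wc_strict_mono[of 0 t0] \<open>0 < t0\<close> \<open>t0 \<in> I\<close> Wc_0 by (simp add: T_def Iset_def)
  define \<rho> where "\<rho> n = 1 + inverse (real (Suc n))" for n
  have \<rho>: "\<And>n. 1 < \<rho> n" "\<rho> \<longlonglongrightarrow> 1"
    using LIMSEQ_inverse_real_of_nat_add[of 1] by (simp_all add: \<rho>_def[abs_def])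
  obtain v where "incseq v" and vpos: "\<And>n. 0 < v n"
    and jump: "\<And>n. 2 ^ (n + 2) * \<phi> (v n) < \<phi> (\<rho> n * v n)" and big: "\<And>n. 1 / T \<le> \<phi> (v n)"
    using not_Delta2_infty_jump_seq[where \<rho>=\<rho> and B="1 / T" and K="\<lambda>n. 2 ^ (n + 2)", OF \<phi> nD \<rho>(1)]
    by auto
  have vnn: "\<And>n. 0 \<le> v n" using vpos less_imp_le by blast
  define a where "a n = (1/2) ^ (n + 2) / \<phi> (v n)" for n
  have apos: "0 < a n" for n using orlicz_fun_pos[OF \<phi> vpos[of n]] by (simp add: a_def)
  have a_le: "a n \<le> T / 4 * (1/2) ^ n" for n
  proof -
    have "1 / \<phi> (v n) \<le> T"
      using big[of n] \<open>0 < T\<close> orlicz_fun_pos[OF \<phi> vpos[of n]] by (simp add: divide_le_eq mult.commute)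
    then have "(1/2) ^ n / 4 * (1 / \<phi> (v n)) \<le> (1/2) ^ n / 4 * T" by (rule mult_left_mono) simp
    then show ?thesis by (simp add: a_def power_add mult.commute)
  qed
  have "summable a" "suminf a \<le> 2 * (T / 4)"
    using summable_le_geometric_half[OF _ a_le] apos less_imp_le by blast+
  then have "suminf a \<le> Wc t0" using \<open>0 < T\<close> by (simp add: T_def)
  then obtain s where s: "strict_mono (\<lambda>n. - s n)" "\<And>n. 0 < s n" "\<And>n. s n \<le> t0"
    "\<And>x. 0 < x \<Longrightarrow> \<exists>n. s n < x" and mass: "\<And>n. Wmass (s (Suc n)) (s n) = ennreal (a n)"
    using Wmass_partition_shrinking[where a=a, OF \<open>t0 \<in> I\<close> apos \<open>summable a\<close>] by blast
  obtain h where h: "decreasing_profile h" "\<And>n x. x \<in> {s (Suc n)<..s n} \<Longrightarrow> h x = v n"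
    "\<And>x. (\<forall>n. x \<notin> {s (Suc n)<..s n}) \<Longrightarrow> h x = 0"
    using step_profile_decreasing[OF s(1,2,4) \<open>incseq v\<close> vnn] by metis
  have "decseq s" using strict_mono_mono[OF s(1)] by (simp add: monotone_on_def decseq_def)
  have s_nonneg: "0 \<le> s n" for n using s(2)[of n] by simp
  have "s n \<in> I" for n using Iset_downward_closed[OF \<open>t0 \<in> I\<close> s_nonneg s(3)] .
  have modular: "wmodular \<phi> (\<lambda>x. r * h x) = (\<Sum>n. ennreal (\<phi> (r * v n) * a n))" if "0 \<le> r" for r
  proof -
    have "wmodular \<phi> (\<lambda>x. r * h x) = (\<Sum>n. ennreal (\<phi> (r * v n)) * Wmass (s (Suc n)) (s n))"
      using h(2,3) s_nonneg \<open>\<And>n. s n \<in> I\<close> vnn that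
      by (intro wmodular_step_fun[OF \<phi> disjoint_family_Ioc_decseq[OF \<open>decseq s\<close>]]) auto
    moreover have "ennreal (\<phi> (r * v n)) * Wmass (s (Suc n)) (s n) = ennreal (\<phi> (r * v n) * a n)" for n
      using mass[of n] orlicz_fun_nonneg[OF \<phi>, of "r * v n"] vnn[of n] apos[of n] that
      by (simp add: ennreal_mult)
    ultimately show ?thesis by simp
  qed
  show ?thesis
  proof (rule that[OF h(1)])
    show "wmodular \<phi> h \<le> 1"
      using modular[of 1] orlicz_jump_series(1)[OF \<phi> \<rho>(2) vpos jump a_def] by simp
    show "wmodular \<phi> (\<lambda>x. r * h x) = \<infinity>" if "1 < r" for r
      using modular[of r] orlicz_jump_series(2)[OF \<phi> \<rho>(2) vpos jump a_def that] that by simp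
  qed
qed

end

lemma fun_counterexample:
  assumes \<phi>: "orlicz_fun \<phi>" and "0 < \<gamma>" "weight_fun \<gamma> w" and nD: "\<not> appr_Delta2 \<gamma> \<phi>"
  shows "\<exists>f\<in>Mspace \<gamma> \<phi> w. Qfun \<gamma> \<phi> w f \<le> 1 \<and> (\<forall>r>(1::real). Qfun \<gamma> \<phi> w (\<lambda>x. r * f x) = top)"
proof -
  interpret weighted_interval \<gamma> w using assms(2,3) by unfold_locales
  obtain h where "decreasing_profile h" "wmodular \<phi> h \<le> 1"
    "\<And>r. 1 < r \<Longrightarrow> wmodular \<phi> (\<lambda>x. r * h x) = \<infinity>"
  proof (cases "Delta2_infty \<phi>")
    case True
    then have "\<gamma> = \<infinity>" "\<not> Delta2_zero \<phi>"
      using nD by (auto simp: appr_Delta2_def Delta2_def split: if_splits)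
    then show ?thesis using bad_profile_not_Delta2_zero[OF \<phi>] that by blast
  qed (use bad_profile_not_Delta2_infty[OF \<phi>] in blast)
  then show ?thesis by (rule Mspace_counterexample[OF \<phi>])
qed

theorem mainTheorem8:
  fixes \<phi> :: "real \<Rightarrow> real"
  assumes "orlicz_fun \<phi>"
  shows "(\<forall>(\<gamma>::ereal) (w::real \<Rightarrow> real). 0 < \<gamma> \<and> weight_fun \<gamma> w \<and> \<not> appr_Delta2 \<gamma> \<phi> \<longrightarrow>
            (\<exists>f\<in>Mspace \<gamma> \<phi> w. Qfun \<gamma> \<phi> w f \<le> 1 \<and>
               (\<forall>r>(1::real). Qfun \<gamma> \<phi> w (\<lambda>x. r * f x) = top)))
       \<and> (\<forall>w::nat \<Rightarrow> real. weight_seq w \<and> \<not> Delta2_zero \<phi> \<longrightarrow>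
            (\<exists>f\<in>mseq \<phi> w. qseq \<phi> w f \<le> 1 \<and>
               (\<forall>r>(1::real). qseq \<phi> w (\<lambda>i. r * f i) = top)))"
  using fun_counterexample[OF assms] seq_counterexample[OF assms] by blast

end
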